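(* Let $r\ge 1$ be an integer, $\mathcal{C}_0 \subseteq \mathbb{F}_2^d$ a linear code with relative distance $\delta$ and $r$'th relative generalized distance $\delta_r$, $G=(L\cup R,E)$ the double cover of a $d$-regular graph on $n$ vertices with expansion $\lambda$, $\varepsilon>0$ with $\frac{\lambda}{d} \leq \frac{\varepsilon^2\delta^2}{2^{r+4}}$, and $z \in (\mathbb{F}_2\cup\{\bot\})^E$ with at most $(1-\varepsilon)\delta\delta_r dn$ coordinates equal to $\bot$. Let $E'\subseteq E$ be the edge set produced by the procedure \textsc{FindHeavyEdges} described in the context, and let $B'$ be the set of vertices $v\in L\cup R$ such that $(v,u)\notin E'$ for more than $\delta d$ neighbours $u$ of $v$. Then: (1) $|B'\cap L|, |B'\cap R| \le \left(1-\frac{\varepsilon}{2}\right)\delta n$; (2) $|E(B')| \le \left(1-\frac{\varepsilon}{4}\right)\left(\delta-\frac{\lambda}{d}\right)\delta nd$, where $E(B')$ denotes the set of edges of $G$ with both endpoints in $B'$.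
   Context: Relative distance of a linear code: minimum relative weight of a nonzero codeword; $r$'th relative generalized distance of $\mathcal{C}_0 \subseteq \mathbb{F}_2^d$: $\frac1d\min_V|\{i:\exists v\in V, v_i\ne 0\}|$ over $r$-dimensional subspaces $V\subseteq\mathcal{C}_0$. For $w\in(\mathbb{F}_2\cup\{\bot\})^d$, $\mathrm{List}_{\mathcal{C}_0}(w)=\{c\in\mathcal{C}_0: c_i=w_i \text{ whenever } w_i\ne\bot\}$. Expansion of a $d$-regular graph: $\max\{\lambda_2,|\lambda_n|\}$ of its adjacency eigenvalues; its double cover $G=(L\cup R,E)$ has $L,R$ copies of the vertex set with $u\in L$, $v\in R$ adjacent iff they are adjacent in the original graph. Fix for each vertex $v$ an ordering $\Gamma_1(v),\dots,\Gamma_d(v)$ of its neighbours. Let $B\subseteq L\cup R$ be the set of vertices $v$ with $z_{(v,u)}=\bot$ for more than $\delta_r d$ neighbours $u$. For $v\notin B$, let $L_v=\mathrm{List}_{\mathcal{C}_0}((z_{(v,\Gamma_1(v))},\dots,z_{(v,\Gamma_d(v))}))$; it is an affine subspace of $\mathbb{F}_2^d$ of some dimension $r_v\le r-1$, and fix $G_v\in\mathbb{F}_2^{d\times r_v}$, $b_v\in\mathbb{F}_2^d$ with $L_v=\{G_vx+b_v: x\in\mathbb{F}_2^{r_v}\}$; the rows of $G_v$ are indexed by the edges incident to $v$. Local equivalence: for $v\notin B$ and edges $(u,v),(w,v)$, write $(u,v)\sim_v(w,v)$ if the rows of $G_v$ indexed by these edges are equal. \textsc{FindHeavyEdges}: start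 with $E'=E$; remove from $E'$ all edges incident to a vertex of $B$; then, as long as there exist an edge $(u,v)\in E'$ (with $v$ either endpoint) such that $|\{(w,v)\in E' : (w,v)\sim_v(u,v)\}| \le \frac{\varepsilon^2\delta^2}{2^{r+3}} d$, remove $(u,v)$ and all $(w,v)\in E'$ with $(w,v)\sim_v(u,v)$ from $E'$; output the final $E'$. *)

theory Defs
  imports "HOL-Analysis.Analysis" "HOL-Library.Z2" "HOL-Library.Multiset"
          "HOL-Computational_Algebra.Polynomial"
begin

section \<open>Codes over F_2 = bit, coordinates indexed by a finite type 'd (d = CARD('d))\<close>

definition linear_code :: "(bit ^ 'd) set \<Rightarrow> bool" where
  "linear_code C \<longleftrightarrow> vec.subspace C"

definition rel_weight :: "bit ^ 'd \<Rightarrow> real" where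
  "rel_weight c = real (card {i. c $ i \<noteq> 0}) / real CARD('d)"

definition rel_distance :: "(bit ^ 'd) set \<Rightarrow> real" where
  "rel_distance C = Min {rel_weight c | c. c \<in> C \<and> c \<noteq> 0}"

definition gen_rel_distance :: "(bit ^ 'd) set \<Rightarrow> nat \<Rightarrow> real" where
  "gen_rel_distance C r =
     Min {real (card {i. \<exists>v\<in>V. v $ i \<noteq> 0}) / real CARD('d)
          | V. V \<subseteq> C \<and> vec.subspace V \<and> vec.dim V = r}"

text \<open>None plays the role of the erasure symbol bot.\<close>
definition list_dec :: "(bit ^ 'd) set \<Rightarrow> (bit option) ^ 'd \<Rightarrow> (bit ^ 'd) set" where
  "list_dec C w = {c \<in> C. \<forall>i. w $ i \<noteq> None \<longrightarrow> c $ i = the (w $ i)}"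

section \<open>Graphs, vertices indexed by a finite type 'n (n = CARD('n))\<close>

definition regular_graph :: "('n \<Rightarrow> 'n \<Rightarrow> bool) \<Rightarrow> nat \<Rightarrow> bool" where
  "regular_graph adj d \<longleftrightarrow> (\<forall>u v. adj u v \<longrightarrow> adj v u) \<and> (\<forall>v. \<not> adj v v)
      \<and> (\<forall>v. card {u. adj v u} = d)"

definition char_poly_mat :: "real ^ 'n ^ 'n \<Rightarrow> real poly" where
  "char_poly_mat A = det (\<chi> i j. (if i = j then [:0, 1:] else 0) - [:A $ i $ j:])"

definition adj_matrix :: "('n \<Rightarrow> 'n \<Rightarrow> bool) \<Rightarrow> real ^ 'n ^ 'n" where
  "adj_matrix adj = (\<chi> i j. if adj i j then 1 else 0)"

text \<open>Eigenvalues with multiplicity, sorted increasingly: lambda_n = first, lambda_2 = (n-1)-th.\<close>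
definition adj_eigenvalues :: "('n::finite \<Rightarrow> 'n \<Rightarrow> bool) \<Rightarrow> real list" where
  "adj_eigenvalues adj = sorted_list_of_multiset (proots (char_poly_mat (adj_matrix adj)))"

definition expansion :: "('n::finite \<Rightarrow> 'n \<Rightarrow> bool) \<Rightarrow> real" where
  "expansion adj = max (adj_eigenvalues adj ! (CARD('n) - 2)) \<bar>adj_eigenvalues adj ! 0\<bar>"

section \<open>Double cover: vertices bool \<times> 'n (False = L, True = R); edges (u,v) with u\<in>L, v\<in>R\<close>

definition dc_edges :: "('n \<Rightarrow> 'n \<Rightarrow> bool) \<Rightarrow> ('n \<times> 'n) set" where
  "dc_edges adj = {(u, v). adj u v}"

text \<open>The edge between double-cover vertex v and (the copy on the other side of) u.\<close>
definition dc_edge :: "bool \<times> 'n \<Rightarrow> 'n \<Rightarrow> 'n \<times> 'n" where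
  "dc_edge v u = (if fst v then (u, snd v) else (snd v, u))"

definition incident :: "('n \<Rightarrow> 'n \<Rightarrow> bool) \<Rightarrow> bool \<times> 'n \<Rightarrow> ('n \<times> 'n) set" where
  "incident adj v = dc_edge v ` {u. adj (snd v) u}"

text \<open>Local received word at v, read along the ordering Gam v of its neighbours.\<close>
definition local_word :: "('n \<times> 'n \<Rightarrow> bit option) \<Rightarrow> (bool \<times> 'n \<Rightarrow> 'd \<Rightarrow> 'n)
     \<Rightarrow> bool \<times> 'n \<Rightarrow> (bit option) ^ 'd" where
  "local_word z Gam v = (\<chi> i. z (dc_edge v (Gam v i)))"

definition bad_set :: "('n \<Rightarrow> 'n \<Rightarrow> bool) \<Rightarrow> real \<Rightarrow> ('n \<times> 'n \<Rightarrow> bit option)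
     \<Rightarrow> (bool \<times> 'n) set" where
  "bad_set adj t z = {v. real (card {u. adj (snd v) u \<and> z (dc_edge v u) = None}) > t}"

text \<open>G_v given by its list of columns gs (so row i of G_v is map (\<lambda>g. g $ i) gs).\<close>
definition is_param :: "(bit ^ 'd) set \<Rightarrow> bit ^ 'd \<Rightarrow> (bit ^ 'd) list \<Rightarrow> bool" where
  "is_param S b gs \<longleftrightarrow> distinct gs \<and> vec.independent (set gs) \<and>
     S = {b + sum_list (map2 (\<lambda>a g. a *s g) xs gs) | xs. length xs = length gs}"

definition local_equiv :: "(bool \<times> 'n \<Rightarrow> (bit ^ 'd) list) \<Rightarrow> (bool \<times> 'n \<Rightarrow> 'd \<Rightarrow> 'n)
     \<Rightarrow> bool \<times> 'n \<Rightarrow> 'n \<times> 'n \<Rightarrow> 'n \<times> 'n \<Rightarrow> bool" where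
  "local_equiv gs Gam v e e' \<longleftrightarrow> (\<exists>i j. e = dc_edge v (Gam v i) \<and> e' = dc_edge v (Gam v j) \<and>
       map (\<lambda>g. g $ i) (gs v) = map (\<lambda>g. g $ j) (gs v))"

definition fhe_step :: "('n \<Rightarrow> 'n \<Rightarrow> bool) \<Rightarrow> real \<Rightarrow> (bool \<times> 'n \<Rightarrow> (bit ^ 'd) list)
     \<Rightarrow> (bool \<times> 'n \<Rightarrow> 'd \<Rightarrow> 'n) \<Rightarrow> ('n \<times> 'n) set \<Rightarrow> ('n \<times> 'n) set \<Rightarrow> bool" where
  "fhe_step adj thr gs Gam E1 E2 \<longleftrightarrow> (\<exists>v e. e \<in> E1 \<and> e \<in> incident adj v \<and>
      real (card {e' \<in> E1. local_equiv gs Gam v e e'}) \<le> thr \<and>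
      E2 = E1 - {e' \<in> E1. local_equiv gs Gam v e e'})"

text \<open>E' is a possible output of FindHeavyEdges (any order of removals).\<close>
definition find_heavy_edges_output :: "('n \<Rightarrow> 'n \<Rightarrow> bool) \<Rightarrow> real \<Rightarrow> (bool \<times> 'n) set
     \<Rightarrow> (bool \<times> 'n \<Rightarrow> (bit ^ 'd) list) \<Rightarrow> (bool \<times> 'n \<Rightarrow> 'd \<Rightarrow> 'n) \<Rightarrow> ('n \<times> 'n) set \<Rightarrow> bool" where
  "find_heavy_edges_output adj thr B gs Gam E' \<longleftrightarrow>
     (fhe_step adj thr gs Gam)\<^sup>*\<^sup>* (dc_edges adj - (\<Union>v\<in>B. incident adj v)) E' \<and>
     \<not> (\<exists>E2. fhe_step adj thr gs Gam E' E2)"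

end

theory Submission
  imports Defs "Jordan_Normal_Form.Schur_Decomposition"
begin

no_notation Matrix.vec_index (infixl \<open>$\<close> 100)
no_notation Matrix.scalar_prod (infix \<open>\<bullet>\<close> 70)

lemma UNIV_bit: "(UNIV :: bit set) = {0, 1}"
proof -
  have "x \<in> {0, 1}" for x :: bit by (cases x) simp_all
  then show ?thesis by blast
qed

instance bit :: finite
  by standard (simp add: UNIV_bit)

lemma card_UNIV_bit: "CARD(bit) = 2"
  by (simp add: UNIV_bit)

lemma ex_nonzero_coordinate: "c \<noteq> 0 \<Longrightarrow> \<exists>i. c $ i \<noteq> 0"
  by (metis Finite_Cartesian_Product.vec_eq_iff zero_index)

lemma rel_distance_bounds:
  fixes C0 :: "(bit^'d::finite) set"
  assumes "c \<in> C0" "c \<noteq> 0"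
  shows "0 < rel_distance C0 \<and> rel_distance C0 \<le> 1"
proof -
  let ?W = "{rel_weight c | c. c \<in> C0 \<and> c \<noteq> 0}"
  have "finite ?W" using finite_image_set[of "\<lambda>c. c \<in> C0 \<and> c \<noteq> 0" rel_weight] by simp
  moreover have "?W \<noteq> {}" using assms by blast
  ultimately have "rel_distance C0 \<in> ?W"
    unfolding rel_distance_def by (rule Min_in)
  then obtain c' :: "bit^'d" where c': "c' \<noteq> 0" "rel_distance C0 = rel_weight c'" by blast
  then obtain i where "c' $ i \<noteq> 0" using ex_nonzero_coordinate by blast
  then have "0 < card {i. c' $ i \<noteq> 0}" by (auto simp: card_gt_0_iff)
  moreover have "card {i. c' $ i \<noteq> 0} \<le> CARD('d)" by (rule card_mono) simp_all
  ultimately show ?thesis using c' by (simp add: rel_weight_def)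
qed

lemma gen_rel_distance_le:
  fixes C0 :: "(bit^'d::finite) set"
  assumes "V \<subseteq> C0" "vec.subspace V" "vec.dim V = r"
  shows "gen_rel_distance C0 r \<le> real (card {i. \<exists>v\<in>V. v $ i \<noteq> 0}) / real CARD('d)"
  unfolding gen_rel_distance_def using assms finite_image_set by (intro Min_le) auto

lemma gen_rel_distance_pos:
  fixes C0 :: "(bit^'d::finite) set"
  assumes dimr: "\<exists>V. V \<subseteq> C0 \<and> vec.subspace V \<and> vec.dim V = r" and r: "r \<ge> 1"
  shows "gen_rel_distance C0 r > 0"
proof -
  let ?D = "{real (card {i. \<exists>v\<in>V. v $ i \<noteq> 0}) / real CARD('d) | V. V \<subseteq> C0 \<and> vec.subspace V \<and> vec.dim V = r}"
  have "x > 0" if x_in: "x \<in> ?D" for x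
  proof -
    obtain V :: "(bit^'d) set" where V: "vec.dim V = r" and x: "x = real (card {i. \<exists>v\<in>V. v $ i \<noteq> 0}) / real CARD('d)"
      using x_in by blast
    obtain v where "v \<in> V" "v \<noteq> 0" using V r vec.dim_eq_0[of V] by auto
    then have "{i. \<exists>v\<in>V. v $ i \<noteq> 0} \<noteq> {}" using ex_nonzero_coordinate by blast
    then show ?thesis using x by (simp add: card_gt_0_iff)
  qed
  moreover have "?D \<noteq> {}" using dimr by blast
  ultimately show ?thesis unfolding gen_rel_distance_def by (simp add: Min_gr_iff)
qed

lemma subspace_with_dim:
  fixes V :: "('a::field^'d::finite) set"
  assumes "vec.subspace V" and "r \<le> vec.dim V"
  obtains W where "W \<subseteq> V" and "vec.subspace W" and "vec.dim W = r"
proof -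
  obtain B where B: "B \<subseteq> V" "vec.independent B" "card B = vec.dim V"
    using vec.basis_exists[of V] by metis
  obtain T where T: "T \<subseteq> B" "card T = r"
    using obtain_subset_with_card_n[of r B] assms(2) B(3) by auto
  have "vec.span T \<subseteq> V" using T(1) B(1) assms(1) by (intro vec.span_minimal) auto
  moreover have "vec.dim (vec.span T) = r"
    using vec.dim_span_eq_card_independent[OF vec.independent_mono[OF B(2) T(1)]] T(2) by simp
  ultimately show thesis using vec.subspace_span that by blast
qed

lemma dim_le_dim_coordinate_hyperplane:
  fixes V :: "('a::field^'d::finite) set"
  assumes V: "vec.subspace V" and v0: "v0 \<in> V" "v0 $ i0 = 1"
  shows "vec.dim V \<le> vec.dim {v \<in> V. v $ i0 = 0} + 1"
proof -
  let ?H = "{v \<in> V. v $ i0 = 0}"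
  have "V \<subseteq> vec.span (insert v0 ?H)"
  proof
    fix v assume v: "v \<in> V"
    have "v - (v $ i0) *s v0 \<in> ?H"
      using v v0 V by (simp add: vec.subspace_diff vec.subspace_scale)
    then have "(v - (v $ i0) *s v0) + (v $ i0) *s v0 \<in> vec.span (insert v0 ?H)"
      by (intro vec.span_add vec.span_scale vec.span_base) simp_all
    then show "v \<in> vec.span (insert v0 ?H)" by simp
  qed
  then have "vec.dim V \<le> vec.dim (insert v0 ?H)"
    using vec.dim_subset vec.dim_span by metis
  also have "\<dots> \<le> vec.dim ?H + 1" by (simp add: vec.dim_insert)
  finally show ?thesis .
qed

lemma dim_le_if_small_support:
  fixes C0 V :: "(bit^'d::finite) set"
  assumes V: "vec.subspace V" "V \<subseteq> C0"
    and supp: "\<And>v i. v \<in> V \<Longrightarrow> i \<notin> I \<Longrightarrow> v $ i = 0"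
    and card_I: "real (card I) \<le> gen_rel_distance C0 r * real CARD('d)"
  shows "vec.dim V \<le> r"
proof (rule ccontr)
  assume "\<not> vec.dim V \<le> r"
  then obtain v0 where v0: "v0 \<in> V" "v0 \<noteq> 0"
    using vec.dim_eq_0[of V] by (metis not_less0 subsetI singletonI le0)
  then obtain i0 where i0: "v0 $ i0 = 1" using ex_nonzero_coordinate by fastforce
  then have "i0 \<in> I" using supp v0(1) by fastforce
  let ?H = "{v \<in> V. v $ i0 = 0}"
  have "vec.subspace ?H" using V(1) by (auto simp: vec.subspace_def)
  moreover have "r \<le> vec.dim ?H"
    using dim_le_dim_coordinate_hyperplane[OF V(1) v0(1) i0] \<open>\<not> vec.dim V \<le> r\<close> by linarith
  ultimately obtain W where W: "W \<subseteq> ?H" "vec.subspace W" "vec.dim W = r"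
    by (rule subspace_with_dim)
  have "{i. \<exists>v\<in>W. v $ i \<noteq> 0} \<subseteq> I - {i0}" using W(1) supp by blast
  then have "card {i. \<exists>v\<in>W. v $ i \<noteq> 0} < card I"
    using \<open>i0 \<in> I\<close> by (meson card_mono card_Diff1_less finite le_less_trans)
  moreover have "gen_rel_distance C0 r * real CARD('d) \<le> real (card {i. \<exists>v\<in>W. v $ i \<noteq> 0})"
    using gen_rel_distance_le[of W C0 r] W V(2) by (auto simp: pos_le_divide_eq)
  ultimately show False using card_I by linarith
qed

lemma list_dec_agrees: "c \<in> list_dec C w \<Longrightarrow> w $ i \<noteq> None \<Longrightarrow> c $ i = the (w $ i)"
  by (simp add: list_dec_def)

lemma map2_scale_map: "map2 (\<lambda>a g. a *s g) (map u gs) gs = map (\<lambda>g. u g *s g) gs"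
  by (induction gs) auto

lemma length_param_le:
  fixes C0 :: "(bit^'d::finite) set"
  assumes code: "linear_code C0" and param: "is_param (list_dec C0 w) b gs"
    and erasures: "real (card {i. w $ i = None}) \<le> gen_rel_distance C0 r * real CARD('d)"
  shows "length gs \<le> r"
proof -
  let ?L = "list_dec C0 w"
  have C0: "vec.subspace C0" using code by (simp add: linear_code_def)
  have dist: "distinct gs" and ind: "vec.independent (set gs)"
    and L: "?L = {b + sum_list (map2 (\<lambda>a g. a *s g) xs gs) | xs. length xs = length gs}"
    using param by (auto simp: is_param_def)
  have in_L: "b + v \<in> ?L" if v: "v \<in> vec.span (set gs)" for v
  proof -
    obtain u where u: "v = (\<Sum>g\<in>set gs. u g *s g)" using v vec.span_finite[of "set gs"] by auto
    have "v = sum_list (map2 (\<lambda>a g. a *s g) (map u gs) gs)"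
      unfolding map2_scale_map u by (rule sum_list_distinct_conv_sum_set[OF dist, symmetric])
    then show ?thesis unfolding L by (metis (mono_tags, lifting) length_map mem_Collect_eq)
  qed
  have b: "b \<in> ?L" using in_L[of 0] by (simp add: vec.span_zero)
  have "vec.span (set gs) \<subseteq> C0"
  proof
    fix v assume "v \<in> vec.span (set gs)"
    then have "b + v \<in> C0" "b \<in> C0" using in_L b by (auto simp: list_dec_def)
    from vec.subspace_diff[OF C0 this] show "v \<in> C0" by simp
  qed
  moreover have "v $ i = 0" if v: "v \<in> vec.span (set gs)" and i: "i \<notin> {i. w $ i = None}" for v i
  proof -
    have "w $ i \<noteq> None" using i by simp
    then have "(b + v) $ i = b $ i"
      using list_dec_agrees[OF in_L[OF v]] list_dec_agrees[OF b] by metis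
    then show ?thesis by (metis add_cancel_right_right vector_add_component)
  qed
  ultimately have "vec.dim (vec.span (set gs)) \<le> r"
    using erasures by (intro dim_le_if_small_support vec.subspace_span) auto
  then show ?thesis
    by (simp add: vec.dim_eq_card_independent[OF ind] distinct_card[OF dist])
qed

lemma sign_conjugate_bij:
  fixes f :: "nat \<Rightarrow> 'n::finite"
  assumes f: "bij_betw f {0..<CARD('n)} (UNIV :: 'n set)"
    and p: "p permutes {0..<CARD('n)}"
  shows "sign (f \<circ> p \<circ> inv_into {0..<CARD('n)} f) = sign p"
  using p finite_atLeastLessThan
proof (induction rule: permutes_induct)
  case id
  have "f \<circ> id \<circ> inv_into {0..<CARD('n)} f = id"
    using f by (auto simp: bij_betw_def f_inv_into_f)
  then show ?case by simp
next
  case (swap a b p)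
  let ?g = "inv_into {0..<CARD('n)} f"
  have inj: "inj_on f {0..<CARD('n)}" using f by (auto simp: bij_betw_def)
  have pin: "p (?g y) \<in> {0..<CARD('n)}" for y
    using swap(4) f by (metis bij_betw_def inv_into_into permutes_in_image UNIV_I)
  have eq: "f \<circ> (Transposition.transpose a b \<circ> p) \<circ> ?g
      = Transposition.transpose (f a) (f b) \<circ> (f \<circ> p \<circ> ?g)"
  proof
    fix y
    have "f (Transposition.transpose a b (p (?g y))) = Transposition.transpose (f a) (f b) (f (p (?g y)))"
      using inj swap(1,2) pin[of y] by (auto simp: Transposition.transpose_def inj_on_eq_iff)
    then show "(f \<circ> (Transposition.transpose a b \<circ> p) \<circ> ?g) y
      = (Transposition.transpose (f a) (f b) \<circ> (f \<circ> p \<circ> ?g)) y" by simp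
  qed
  have fab: "f a \<noteq> f b" using inj swap(1,2,3) by (auto simp: inj_on_eq_iff)
  have "bij_betw (f \<circ> (p \<circ> ?g)) UNIV UNIV"
    by (rule bij_betw_trans[OF bij_betw_trans[OF bij_betw_inv_into[OF f] permutes_imp_bij[OF swap(4)]] f])
  then have "(f \<circ> p \<circ> ?g) permutes UNIV"
    by (intro bij_imp_permutes) (auto simp: o_assoc)
  then have perm1: "permutation (f \<circ> p \<circ> ?g)"
    by (intro permutes_imp_permutation[where S=UNIV]) auto
  have perm2: "permutation p" using swap(4) permutes_imp_permutation by blast
  have s1: "sign (Transposition.transpose (f a) (f b) \<circ> (f \<circ> p \<circ> ?g))
      = sign (Transposition.transpose (f a) (f b)) * sign (f \<circ> p \<circ> ?g)"
    by (rule sign_compose[OF permutation_swap_id perm1])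
  have s2: "sign (Transposition.transpose a b \<circ> p) = sign (Transposition.transpose a b) * sign p"
    by (rule sign_compose[OF permutation_swap_id perm2])
  show ?case
    unfolding eq s1 s2 sign_swap_id swap.IH if_not_P[OF fab] if_not_P[OF swap(3)] ..
qed

definition mat_of_vec_mat :: "(nat \<Rightarrow> 'n::finite) \<Rightarrow> 'a^'n^'n \<Rightarrow> 'a mat" where
  "mat_of_vec_mat f A = Matrix.mat CARD('n) CARD('n) (\<lambda>(i, j). A $ f i $ f j)"

lemma mat_of_vec_mat_dim [simp]:
  "dim_row (mat_of_vec_mat f A) = CARD('n)" "dim_col (mat_of_vec_mat f A) = CARD('n)"
  for A :: "'a^'n::finite^'n"
  unfolding mat_of_vec_mat_def by (rule dim_row_mat, rule dim_col_mat)

lemma mat_of_vec_mat_carrier: "mat_of_vec_mat f A \<in> carrier_mat CARD('n) CARD('n)"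
  for A :: "'a^'n::finite^'n"
  unfolding carrier_mat_def by simp

lemma mat_of_vec_mat_index [simp]:
  "i < CARD('n) \<Longrightarrow> j < CARD('n) \<Longrightarrow> mat_of_vec_mat f A $$ (i, j) = A $ f i $ f j"
  for A :: "'a^'n::finite^'n"
  unfolding mat_of_vec_mat_def by simp

lemma det_mat_of_vec_mat:
  fixes M :: "'a::comm_ring_1^'n::finite^'n" and f :: "nat \<Rightarrow> 'n"
  assumes f: "bij_betw f {0..<CARD('n)} (UNIV :: 'n set)"
  shows "Determinants.det M = Determinant.det (mat_of_vec_mat f M)"
proof -
  let ?n = "CARD('n)"
  let ?g = "inv_into {0..<?n} f"
  define h where "h p = f \<circ> p \<circ> ?g" for p :: "nat \<Rightarrow> nat"
  define h' where "h' q = (\<lambda>i. if i < ?n then ?g (q (f i)) else i)" for q :: "'n \<Rightarrow> 'n"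
  have inj: "inj_on f {0..<?n}" using f by (auto simp: bij_betw_def)
  have gf: "?g (f i) = i" if "i < ?n" for i using inj that by (simp add: inv_into_f_f)
  have fg: "f (?g y) = y" for y using f by (auto simp: bij_betw_def f_inv_into_f)
  have gin: "?g y < ?n" for y using f by (metis atLeastLessThan_iff bij_betw_def inv_into_into UNIV_I)
  have hp: "h p permutes UNIV" if p: "p permutes {0..<?n}" for p
  proof -
    have "bij_betw (f \<circ> (p \<circ> ?g)) UNIV UNIV"
      by (rule bij_betw_trans[OF bij_betw_trans[OF bij_betw_inv_into[OF f] permutes_imp_bij[OF p]] f])
    then show ?thesis unfolding h_def by (intro bij_imp_permutes) (auto simp: o_assoc)
  qed
  have h'q: "h' q permutes {0..<?n}" if q: "q permutes UNIV" for q
  proof (rule bij_imp_permutes)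
    have "bij_betw (?g \<circ> (q \<circ> f)) {0..<?n} {0..<?n}"
      by (rule bij_betw_trans[OF bij_betw_trans[OF f permutes_imp_bij[OF q]] bij_betw_inv_into[OF f]])
    moreover have "bij_betw (h' q) {0..<?n} {0..<?n} = bij_betw (?g \<circ> (q \<circ> f)) {0..<?n} {0..<?n}"
      by (rule bij_betw_cong) (simp add: h'_def)
    ultimately show "bij_betw (h' q) {0..<?n} {0..<?n}" by simp
    show "\<And>x. x \<notin> {0..<?n} \<Longrightarrow> h' q x = x" by (auto simp: h'_def)
  qed
  have hh': "h (h' q) = q" for q
    by (rule ext) (simp add: h_def h'_def gin fg)
  have h'h: "h' (h p) = p" if p: "p permutes {0..<?n}" for p
  proof (rule ext)
    fix i
    show "h' (h p) i = p i"
    proof (cases "i < ?n")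
      case True
      then have "p i < ?n" using permutes_in_image[OF p, of i] by simp
      then show ?thesis using True by (simp add: h_def h'_def gf)
    next
      case False
      have "p i = i" using p False by (intro permutes_not_in[OF p]) auto
      then show ?thesis using False by (simp add: h'_def)
    qed
  qed
  have bij: "bij_betw h {p. p permutes {0..<?n}} {q. q permutes UNIV}"
    apply (rule bij_betw_byWitness[where f'=h'])
    using h'h apply blast
    using hh' apply blast
    using hp apply blast
    using h'q apply blast
    done
  have "Determinants.det M = (\<Sum>q\<in>{q. q permutes UNIV}. of_int (sign q) * (\<Prod>y\<in>UNIV. M $ y $ q y))"
    unfolding Determinants.det_def by simp
  also have "\<dots> = (\<Sum>p\<in>{p. p permutes {0..<?n}}. of_int (sign (h p)) * (\<Prod>y\<in>UNIV. M $ y $ h p y))"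
    by (rule sum.reindex_bij_betw[OF bij, symmetric])
  also have "\<dots> = (\<Sum>p\<in>{p. p permutes {0..<?n}}. of_int (sign p) * (\<Prod>i\<in>{0..<?n}. M $ f i $ f (p i)))"
  proof (rule sum.cong[OF refl])
    fix p assume "p \<in> {p. p permutes {0..<?n}}"
    then have p: "p permutes {0..<?n}" by simp
    have "sign (h p) = sign p" unfolding h_def by (rule sign_conjugate_bij[OF f p])
    moreover have "(\<Prod>y\<in>UNIV. M $ y $ h p y) = (\<Prod>i\<in>{0..<?n}. M $ f i $ h p (f i))"
      by (rule prod.reindex_bij_betw[OF f, symmetric])
    moreover have "(\<Prod>i\<in>{0..<?n}. M $ f i $ h p (f i)) = (\<Prod>i\<in>{0..<?n}. M $ f i $ f (p i))"
      by (rule prod.cong) (auto simp: h_def gf)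
    ultimately show "of_int (sign (h p)) * (\<Prod>y\<in>UNIV. M $ y $ h p y) = of_int (sign p) * (\<Prod>i\<in>{0..<?n}. M $ f i $ f (p i))"
      by simp
  qed
  also have "\<dots> = Determinant.det (mat_of_vec_mat f M)"
  proof -
    have "(\<Prod>i\<in>{0..<?n}. M $ f i $ f (p i)) = (\<Prod>i\<in>{0..<?n}. mat_of_vec_mat f M $$ (i, p i))"
      if "p permutes {0..<?n}" for p
      using that by (intro prod.cong refl) (simp add: permutes_in_image)
    then show ?thesis
      unfolding Determinant.det_def mat_of_vec_mat_dim if_P[OF refl] by (intro sum.cong refl) simp
  qed
  finally show ?thesis .
qed

primrec matrix_power :: "'a::semiring_1^'n::finite^'n \<Rightarrow> nat \<Rightarrow> 'a^'n^'n" where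
  "matrix_power A 0 = Finite_Cartesian_Product.mat 1"
| "matrix_power A (Suc k) = matrix_power A k ** A"

lemma mat_of_vec_mat_mult:
  fixes A B :: "'a::semiring_1^'n::finite^'n"
  assumes f: "bij_betw f {0..<CARD('n)} UNIV"
  shows "mat_of_vec_mat f (A ** B) = mat_of_vec_mat f A * mat_of_vec_mat f B"
proof (rule eq_matI)
  fix i j assume "i < dim_row (mat_of_vec_mat f A * mat_of_vec_mat f B)"
    and "j < dim_col (mat_of_vec_mat f A * mat_of_vec_mat f B)"
  then have i: "i < CARD('n)" and j: "j < CARD('n)" by simp_all
  have "(A ** B) $ f i $ f j = (\<Sum>k\<in>UNIV. A $ f i $ k * B $ k $ f j)"
    by (simp add: matrix_matrix_mult_def)
  also have "\<dots> = (\<Sum>l\<in>{0..<CARD('n)}. A $ f i $ f l * B $ f l $ f j)"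
    by (rule sum.reindex_bij_betw[OF f, symmetric])
  finally show "mat_of_vec_mat f (A ** B) $$ (i, j) = (mat_of_vec_mat f A * mat_of_vec_mat f B) $$ (i, j)"
    using i j by (simp add: scalar_prod_def)
qed simp_all

lemma mat_of_vec_mat_one:
  assumes f: "bij_betw f {0..<CARD('n)} (UNIV :: 'n::finite set)"
  shows "mat_of_vec_mat f (Finite_Cartesian_Product.mat 1 :: 'a::semiring_1^'n^'n) = 1\<^sub>m CARD('n)"
  using f by (intro eq_matI) (auto simp: Finite_Cartesian_Product.mat_def bij_betw_def inj_on_eq_iff)

lemma mat_of_vec_mat_power:
  fixes A :: "'a::semiring_1^'n::finite^'n"
  assumes f: "bij_betw f {0..<CARD('n)} UNIV"
  shows "mat_of_vec_mat f (matrix_power A k) = mat_of_vec_mat f A ^\<^sub>m k"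
  by (induction k) (simp_all add: mat_of_vec_mat_one[OF f] mat_of_vec_mat_mult[OF f])

lemma char_poly_mat_eq_char_poly:
  fixes A :: "real^'n::finite^'n"
  assumes f: "bij_betw f {0..<CARD('n)} UNIV"
  shows "char_poly_mat A = char_poly (mat_of_vec_mat f A)"
proof -
  have "mat_of_vec_mat f (\<chi> i j. (if i = j then [:0, 1:] else 0) - [:A $ i $ j:])
      = char_poly_matrix (mat_of_vec_mat f A)"
    using f by (intro eq_matI)
      (auto simp: char_poly_matrix_def bij_betw_def inj_on_eq_iff)
  then show ?thesis
    unfolding char_poly_mat_def char_poly_def det_mat_of_vec_mat[OF f] by simp
qed

definition mat_trace :: "'a::comm_semiring_1 mat \<Rightarrow> 'a" where
  "mat_trace A = (\<Sum>i<dim_row A. A $$ (i, i))"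

lemma trace_eq_mat_trace:
  fixes A :: "'a::comm_semiring_1^'n::finite^'n"
  assumes f: "bij_betw f {0..<CARD('n)} UNIV"
  shows "trace A = mat_trace (mat_of_vec_mat f A)"
proof -
  have "trace A = (\<Sum>i\<in>{0..<CARD('n)}. A $ f i $ f i)"
    unfolding trace_def by (rule sum.reindex_bij_betw[OF f, symmetric])
  then show ?thesis by (simp add: mat_trace_def lessThan_atLeast0)
qed

lemma mat_trace_mult_comm:
  assumes "A \<in> carrier_mat n n" and "B \<in> carrier_mat n n"
  shows "mat_trace (A * B) = mat_trace (B * A)"
proof -
  have "mat_trace (A * B) = (\<Sum>i<n. \<Sum>k<n. A $$ (i, k) * B $$ (k, i))"
    unfolding mat_trace_def using assms by (intro sum.cong) (auto simp: scalar_prod_def lessThan_atLeast0)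
  also have "\<dots> = (\<Sum>k<n. \<Sum>i<n. B $$ (k, i) * A $$ (i, k))"
    by (subst sum.swap) (simp add: mult.commute)
  also have "\<dots> = mat_trace (B * A)"
    unfolding mat_trace_def using assms by (intro sum.cong) (auto simp: scalar_prod_def lessThan_atLeast0)
  finally show ?thesis .
qed

lemma proots_prod_linear_factors: "proots (\<Prod>e\<leftarrow>es. [:-e, 1:]) = mset (es :: 'a::idom list)"
proof (induction es)
  case (Cons a es)
  have "(\<Prod>e\<leftarrow>es. [:-e, 1:]) \<noteq> 0" by (auto simp: prod_list_zero_iff)
  then show ?case using Cons.IH by (simp add: proots_mult del: mult_pCons_left)
qed simp

lemma upper_triangular_pow_mat:
  fixes B :: "'a::comm_semiring_1 mat"
  assumes B: "B \<in> carrier_mat n n" and ut: "upper_triangular B"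
  shows "upper_triangular (B ^\<^sub>m k) \<and> (\<forall>i<n. (B ^\<^sub>m k) $$ (i, i) = (B $$ (i, i)) ^ k)"
proof (induction k)
  case 0
  then show ?case using B by simp
next
  case (Suc k)
  let ?X = "B ^\<^sub>m k"
  have lowX: "?X $$ (i, l) = 0" if "i < n" "l < i" for i l
    using Suc.IH B that by (auto simp: upper_triangular_def)
  have lowB: "B $$ (l, j) = 0" if "l < n" "j < l" for l j
    using ut B that by (auto simp: upper_triangular_def)
  have entry: "(B ^\<^sub>m Suc k) $$ (i, j) = (\<Sum>l<n. ?X $$ (i, l) * B $$ (l, j))"
    if "i < n" "j < n" for i j
    using B that by (simp add: scalar_prod_def lessThan_atLeast0)
  have "(B ^\<^sub>m Suc k) $$ (i, j) = 0" if "i < n" "j < i" for i j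
  proof -
    have "?X $$ (i, l) * B $$ (l, j) = 0" if "l < n" for l
      using lowX[of i l] lowB[of l j] that \<open>i < n\<close> \<open>j < i\<close> by (cases "l < i") auto
    then show ?thesis using entry[of i j] that by simp
  qed
  moreover have "(B ^\<^sub>m Suc k) $$ (i, i) = (B $$ (i, i)) ^ Suc k" if i: "i < n" for i
  proof -
    have "?X $$ (i, l) * B $$ (l, i) = 0" if "l < n" "l \<noteq> i" for l
      using lowX[of i l] lowB[of l i] that i by (cases "l < i") auto
    then have "(\<Sum>l<n. ?X $$ (i, l) * B $$ (l, i))
        = (\<Sum>l<n. if l = i then ?X $$ (i, i) * B $$ (i, i) else 0)"
      by (intro sum.cong) auto
    also have "\<dots> = ?X $$ (i, i) * B $$ (i, i)" using i by simp
    finally show ?thesis using entry[OF i i] Suc.IH i by (simp add: mult.commute)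
  qed
  ultimately show ?case using B by (auto simp: upper_triangular_def)
qed

lemma mat_trace_pow_mat_eq_sum_roots:
  fixes A :: "real mat"
  assumes A: "A \<in> carrier_mat n n" and cp: "char_poly A = (\<Prod>e\<leftarrow>es. [:-e, 1:])"
  shows "mat_trace (A ^\<^sub>m k) = (\<Sum>e\<leftarrow>es. e ^ k)"
proof -
  obtain B P Q where "schur_decomposition A es = (B, P, Q)"
    by (cases "schur_decomposition A es")
  from schur_decomposition[OF A cp this]
  have wit: "similar_mat_wit A B P Q" and ut: "upper_triangular B" and dg: "diag_mat B = es"
    by auto
  from wit A have B: "B \<in> carrier_mat n n" and P: "P \<in> carrier_mat n n"
    and Q: "Q \<in> carrier_mat n n" and QP: "Q * P = 1\<^sub>m n"
    by (auto simp: similar_mat_wit_def Let_def)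
  have Bk: "B ^\<^sub>m k \<in> carrier_mat n n" using B by simp
  have "mat_trace (A ^\<^sub>m k) = mat_trace ((P * B ^\<^sub>m k) * Q)"
    by (simp add: similar_mat_wit_pow_id[OF wit])
  also have "\<dots> = mat_trace (Q * (P * B ^\<^sub>m k))"
    using P Q Bk by (intro mat_trace_mult_comm) auto
  also have "Q * (P * B ^\<^sub>m k) = B ^\<^sub>m k"
    using P Q Bk by (simp add: assoc_mult_mat[symmetric] QP left_mult_one_mat)
  also have "mat_trace (B ^\<^sub>m k) = (\<Sum>i<n. (B $$ (i, i)) ^ k)"
    unfolding mat_trace_def using upper_triangular_pow_mat[OF B ut] B by simp
  also have "\<dots> = (\<Sum>e\<leftarrow>es. e ^ k)"
    unfolding dg[symmetric] diag_mat_def using B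
    by (simp add: interv_sum_list_conv_sum_set_nat comp_def lessThan_atLeast0)
  finally show ?thesis .
qed

lemma eigenvalue_real_if_symmetric:
  fixes A :: "real mat"
  assumes A: "A \<in> carrier_mat n n" and sym: "\<And>i j. i < n \<Longrightarrow> j < n \<Longrightarrow> A $$ (i, j) = A $$ (j, i)"
    and ev: "eigenvalue (map_mat complex_of_real A) a"
  shows "a \<in> \<real>"
proof -
  let ?Ac = "map_mat complex_of_real A"
  obtain v where v: "v \<in> carrier_vec n" and v0: "v \<noteq> 0\<^sub>v n" and Av: "?Ac *\<^sub>v v = a \<cdot>\<^sub>v v"
    using ev A by (auto simp: eigenvalue_def eigenvector_def)
  define w where "w i = vec_index v i" for i
  have Aw: "(\<Sum>j<n. complex_of_real (A $$ (i, j)) * w j) = a * w i" if i: "i < n" for i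
  proof -
    have "vec_index (?Ac *\<^sub>v v) i = a * w i" using Av i v by (simp add: w_def)
    then show ?thesis using i A v by (simp add: scalar_prod_def w_def lessThan_atLeast0)
  qed
  define s where "s = (\<Sum>i<n. cnj (w i) * (\<Sum>j<n. complex_of_real (A $$ (i, j)) * w j))"
  define N where "N = (\<Sum>i<n. (cmod (w i))\<^sup>2)"
  have s_eq: "s = a * of_real N"
  proof -
    have "s = (\<Sum>i<n. a * (cnj (w i) * w i))"
      unfolding s_def by (rule sum.cong) (simp_all add: Aw mult.left_commute)
    then show ?thesis
      by (simp add: N_def sum_distrib_left complex_norm_square mult.commute del: of_real_power)
  qed
  text \<open>The Hermitian form of a real symmetric matrix takes real values.\<close>
  have "cnj s = (\<Sum>j<n. \<Sum>i<n. complex_of_real (A $$ (i, j)) * w i * cnj (w j))"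
    unfolding s_def by (subst sum.swap) (simp add: sum_distrib_left mult.commute mult.left_commute)
  also have "\<dots> = s"
    unfolding s_def by (intro sum.cong refl) (simp add: sum_distrib_left sym mult.commute mult.left_commute)
  finally have cs: "cnj s = s" .
  obtain i0 where i0: "i0 < n" "w i0 \<noteq> 0"
    using v v0 by (metis eq_vecI index_zero_vec w_def carrier_vecD)
  have "(cmod (w i0))\<^sup>2 \<le> N" unfolding N_def using i0 by (intro member_le_sum) auto
  then have "N > 0" using i0 by (smt (verit) zero_less_power2 norm_eq_zero)
  then have "cnj a = a" using cs s_eq by simp
  then show ?thesis by (metis Reals_cnj_iff)
qed

lemma char_poly_real_symmetric_splits:
  fixes A :: "real mat"
  assumes A: "A \<in> carrier_mat n n" and sym: "\<And>i j. i < n \<Longrightarrow> j < n \<Longrightarrow> A $$ (i, j) = A $$ (j, i)"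
  obtains es where "char_poly A = (\<Prod>e\<leftarrow>es. [:-e, 1:])" and "length es = n"
proof -
  interpret of_real_poly: map_poly_inj_idom_hom "of_real :: real \<Rightarrow> complex" ..
  let ?Ac = "map_mat complex_of_real A"
  have Ac: "?Ac \<in> carrier_mat n n" using A by simp
  obtain as where as: "char_poly ?Ac = (\<Prod>a\<leftarrow>as. [:-a, 1:])" and len: "length as = n"
    using char_poly_factorized[OF Ac] by blast
  have "a \<in> \<real>" if "a \<in> set as" for a
  proof (rule eigenvalue_real_if_symmetric[OF A sym])
    show "eigenvalue ?Ac a"
      unfolding eigenvalue_root_char_poly[OF Ac] as using that by (rule linear_poly_root)
  qed
  then have as_Re: "as = map (complex_of_real \<circ> Re) as"
    by (intro map_idI[symmetric]) (auto simp: Reals_def)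
  have "map_poly complex_of_real (char_poly A) = char_poly ?Ac"
    by (rule of_real_hom.char_poly_hom[OF A, symmetric])
  also have "\<dots> = map_poly complex_of_real (\<Prod>e\<leftarrow>map Re as. [:-e, 1:])"
    by (subst as, subst as_Re) (simp add: of_real_poly.hom_prod_list comp_def)
  finally have "char_poly A = (\<Prod>e\<leftarrow>map Re as. [:-e, 1:])" by simp
  then show thesis using len by (intro that[of "map Re as"]) auto
qed

lemma symmetric_matrix_spectrum:
  fixes A :: "real^'n::finite^'n"
  assumes sym: "transpose A = A"
  obtains es where "length es = CARD('n)" and "proots (char_poly_mat A) = mset es"
    and "\<And>k. trace (matrix_power A k) = (\<Sum>e\<leftarrow>es. e ^ k)"
proof -
  obtain f where f: "bij_betw f {0..<CARD('n)} (UNIV :: 'n set)"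
    using ex_bij_betw_nat_finite[of "UNIV :: 'n set"] by auto
  let ?M = "mat_of_vec_mat f A"
  have M: "?M \<in> carrier_mat CARD('n) CARD('n)" by (rule mat_of_vec_mat_carrier)
  have "A $ i $ j = A $ j $ i" for i j
    using arg_cong[OF sym, of "\<lambda>M. M $ j $ i"] by (simp add: transpose_def)
  then have "?M $$ (i, j) = ?M $$ (j, i)" if "i < CARD('n)" "j < CARD('n)" for i j
    using that by simp
  then obtain es where es: "char_poly ?M = (\<Prod>e\<leftarrow>es. [:-e, 1:])" and len: "length es = CARD('n)"
    by (rule char_poly_real_symmetric_splits[OF M])
  show thesis
  proof
    show "length es = CARD('n)" by (fact len)
    show "proots (char_poly_mat A) = mset es"
      by (simp add: char_poly_mat_eq_char_poly[OF f] es proots_prod_linear_factors)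
    show "trace (matrix_power A k) = (\<Sum>e\<leftarrow>es. e ^ k)" for k
      by (simp add: trace_eq_mat_trace[OF f] mat_of_vec_mat_power[OF f]
          mat_trace_pow_mat_eq_sum_roots[OF M es])
  qed
qed

lemma matrix_power_add: "matrix_power A (m + k) = matrix_power A m ** matrix_power A k"
  by (induction k) (simp_all add: matrix_mul_assoc)

lemma matrix_power_Suc_left: "matrix_power A (Suc k) = A ** matrix_power A k"
  using matrix_power_add[of A 1 k] by simp

lemma transpose_matrix_power:
  fixes A :: "'a::comm_semiring_1^'n::finite^'n"
  assumes "transpose A = A" shows "transpose (matrix_power A k) = matrix_power A k"
proof (induction k)
  case (Suc k)
  then have "transpose (matrix_power A (Suc k)) = A ** matrix_power A k"
    using assms by (simp add: matrix_transpose_mul)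
  then show ?case by (simp only: matrix_power_Suc_left)
qed simp

lemma row_sum_matrix_power:
  fixes A :: "'a::comm_semiring_1^'n::finite^'n"
  assumes rows: "\<And>i. (\<Sum>j\<in>UNIV. A $ i $ j) = d"
  shows "(\<Sum>j\<in>UNIV. matrix_power A k $ i $ j) = d ^ k"
proof (induction k arbitrary: i)
  case 0
  then show ?case by (simp add: Finite_Cartesian_Product.mat_def)
next
  case (Suc k)
  have "(\<Sum>j\<in>UNIV. matrix_power A (Suc k) $ i $ j)
      = (\<Sum>l\<in>UNIV. matrix_power A k $ i $ l * (\<Sum>j\<in>UNIV. A $ l $ j))"
    by (simp add: matrix_matrix_mult_def sum_distrib_left) (rule sum.swap)
  also have "\<dots> = (\<Sum>l\<in>UNIV. matrix_power A k $ i $ l) * d"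
    by (simp add: rows sum_distrib_right)
  finally show ?case using Suc by (simp add: mult.commute)
qed

lemma matrix_power_nonneg:
  fixes A :: "real^'n::finite^'n"
  assumes "\<And>i j. 0 \<le> A $ i $ j" shows "0 \<le> matrix_power A k $ i $ j"
  using assms
  by (induction k arbitrary: i j)
    (auto simp: Finite_Cartesian_Product.mat_def matrix_matrix_mult_def intro!: sum_nonneg)

lemma inner_matrix_vector_symmetric:
  fixes A :: "real^'n::finite^'n"
  assumes "transpose A = A" shows "(A *v x) \<bullet> y = x \<bullet> (A *v y)"
  by (metis assms dot_lmul_matrix vector_transpose_matrix)

lemma inner_vec_real: "x \<bullet> y = (\<Sum>i\<in>UNIV. x $ i * y $ i)" for x y :: "real^'n::finite"
  by (simp add: inner_vec_def)

text \<open>Row-wise Cauchy--Schwarz after subtracting the mean row sum, which is invisible to a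
  vector orthogonal to the constants.\<close>
lemma inner_matrix_vector_sum_zero_le:
  fixes P :: "real^'n::finite^'n" and y :: "real^'n"
  assumes sym: "transpose P = P" and rows: "\<And>i. (\<Sum>j\<in>UNIV. P $ i $ j) = s"
    and y: "(\<Sum>i\<in>UNIV. y $ i) = 0"
  shows "(P *v y) \<bullet> (P *v y) \<le> (trace (P ** P) - s\<^sup>2) * (y \<bullet> y)"
proof -
  define n where "n = real CARD('n)"
  define c where "c = s / n"
  have cn: "c * n = s" by (simp add: c_def n_def)
  have P_sym: "P $ j $ i = P $ i $ j" for i j
    using arg_cong[OF sym, of "\<lambda>M. M $ i $ j"] by (simp add: transpose_def)
  have centered: "(P *v y) $ i = (\<Sum>j\<in>UNIV. (P $ i $ j - c) * y $ j)" for i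
  proof -
    have "(\<Sum>j\<in>UNIV. (P $ i $ j - c) * y $ j) = (P *v y) $ i - c * (\<Sum>j\<in>UNIV. y $ j)"
      by (simp add: matrix_vector_mult_def algebra_simps sum_subtractf sum_distrib_left)
    then show ?thesis using y by simp
  qed
  have "(P *v y) \<bullet> (P *v y) = (\<Sum>i\<in>UNIV. ((P *v y) $ i)\<^sup>2)"
    by (simp add: inner_vec_real power2_eq_square)
  also have "\<dots> \<le> (\<Sum>i\<in>UNIV. (\<Sum>j\<in>UNIV. (P $ i $ j - c)\<^sup>2) * (y \<bullet> y))"
    unfolding centered inner_vec_real
  proof (intro sum_mono)
    fix i
    show "(\<Sum>j\<in>UNIV. (P $ i $ j - c) * y $ j)\<^sup>2
        \<le> (\<Sum>j\<in>UNIV. (P $ i $ j - c)\<^sup>2) * (\<Sum>j\<in>UNIV. y $ j * y $ j)"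
      using Cauchy_Schwarz_ineq_sum[of "\<lambda>j. P $ i $ j - c" "\<lambda>j. y $ j" UNIV]
      by (simp add: power2_eq_square)
  qed
  also have "\<dots> = (\<Sum>i\<in>UNIV. \<Sum>j\<in>UNIV. (P $ i $ j - c)\<^sup>2) * (y \<bullet> y)"
    by (simp add: sum_distrib_right)
  also have "(\<Sum>i\<in>UNIV. \<Sum>j\<in>UNIV. (P $ i $ j - c)\<^sup>2)
      = (\<Sum>i\<in>UNIV. \<Sum>j\<in>UNIV. P $ i $ j * P $ j $ i) - n * (2 * c * s) + n * (n * c\<^sup>2)"
  proof -
    have row: "(\<Sum>j\<in>UNIV. (P $ i $ j - c)\<^sup>2)
        = (\<Sum>j\<in>UNIV. P $ i $ j * P $ j $ i) - 2 * c * s + n * c\<^sup>2" for i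
    proof -
      have "(\<Sum>j\<in>UNIV. (P $ i $ j - c)\<^sup>2)
          = (\<Sum>j\<in>UNIV. P $ i $ j * P $ j $ i - 2 * c * P $ i $ j + c\<^sup>2)"
        by (intro sum.cong) (simp_all add: P_sym power2_eq_square algebra_simps)
      also have "\<dots> = (\<Sum>j\<in>UNIV. P $ i $ j * P $ j $ i) - 2 * c * (\<Sum>j\<in>UNIV. P $ i $ j) + n * c\<^sup>2"
        by (simp add: sum.distrib sum_subtractf sum_distrib_left n_def)
      finally show ?thesis by (simp add: rows)
    qed
    show ?thesis by (simp add: row sum.distrib sum_subtractf n_def)
  qed
  also have "\<dots> = trace (P ** P) - s\<^sup>2"
  proof -
    have "trace (P ** P) = (\<Sum>i\<in>UNIV. \<Sum>j\<in>UNIV. P $ i $ j * P $ j $ i)"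
      by (simp add: trace_def matrix_matrix_mult_def)
    moreover have "n * (2 * c * s) - n * (n * c\<^sup>2) = s\<^sup>2"
      unfolding cn[symmetric] by (simp add: power2_eq_square algebra_simps)
    ultimately show ?thesis by simp
  qed
  finally show ?thesis .
qed

lemma inner_self_pow_two_power_le:
  fixes A :: "real^'n::finite^'n"
  assumes sym: "transpose A = A"
  shows "((A *v y) \<bullet> (A *v y)) ^ (2 ^ j)
     \<le> (matrix_power A (2 ^ j) *v y) \<bullet> (matrix_power A (2 ^ j) *v y) * (y \<bullet> y) ^ (2 ^ j - 1)"
proof (induction j)
  case 0
  then show ?case by simp
next
  case (Suc j)
  let ?m = "2 ^ j :: nat"
  let ?Q = "matrix_power A ?m"
  let ?Q2 = "matrix_power A (2 ^ Suc j)"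
  define N where "N v = v \<bullet> v" for v :: "real^'n"
  have "N (?Q *v y) = y \<bullet> (?Q *v (?Q *v y))"
    unfolding N_def by (rule inner_matrix_vector_symmetric[OF transpose_matrix_power[OF sym]])
  also have "\<dots> = y \<bullet> (?Q2 *v y)"
    by (simp add: matrix_vector_mul_assoc mult_2 flip: matrix_power_add)
  finally have "(N (?Q *v y))\<^sup>2 \<le> N y * N (?Q2 *v y)"
    unfolding N_def by (metis Cauchy_Schwarz_ineq)
  moreover have "(N (A *v y)) ^ (2 ^ Suc j) \<le> (N (?Q *v y))\<^sup>2 * (N y) ^ (2 * (?m - 1))"
  proof -
    have "(N (A *v y)) ^ (2 ^ Suc j) = ((N (A *v y)) ^ ?m)\<^sup>2"
      by (simp add: power_mult[symmetric] mult.commute)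
    also have "\<dots> \<le> (N (?Q *v y) * (N y) ^ (?m - 1))\<^sup>2"
      using Suc.IH unfolding N_def by (intro power_mono) simp_all
    finally show ?thesis by (simp add: power_mult_distrib power_mult[symmetric] mult.commute)
  qed
  ultimately have "(N (A *v y)) ^ (2 ^ Suc j) \<le> N (?Q2 *v y) * (N y * (N y) ^ (2 * (?m - 1)))"
    by (smt (verit, best) N_def inner_ge_zero mult_right_mono zero_le_power mult.commute mult.assoc)
  also have "N y * (N y) ^ (2 * (?m - 1)) = (N y) ^ (2 ^ Suc j - 1)"
  proof -
    have "1 \<le> ?m" and "2 ^ Suc j = 2 * ?m" by simp_all
    then have "2 ^ Suc j - 1 = Suc (2 * (?m - 1))" by linarith
    then show ?thesis by simp
  qed
  finally show ?case unfolding N_def .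
qed

lemma le_if_two_power_powers_le:
  fixes a b C :: real
  assumes a: "0 \<le> a" and b: "0 \<le> b" and le: "\<And>j::nat. a ^ (2 ^ j) \<le> C * b ^ (2 ^ j)"
  shows "a \<le> b"
proof (rule ccontr)
  assume "\<not> a \<le> b"
  then have ab: "b < a" by simp
  show False
  proof (cases "b = 0")
    case True
    with le[of 0] ab show False by simp
  next
    case False
    with b have b_pos: "b > 0" by simp
    then have q: "a / b > 1" using ab by simp
    obtain k where k: "C < (a / b) ^ k" using real_arch_pow[OF q] by blast
    have "(a / b) ^ k \<le> (a / b) ^ (2 ^ k)"
      using q by (intro power_increasing) (simp_all add: less_imp_le)
    also have "\<dots> \<le> C" using le[of k] b_pos by (simp add: power_divide divide_le_eq)
    finally show False using k by simp
  qed
qed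

text \<open>The trace method: bounds on the traces of all even powers control the norm of \<open>A\<close> on
  the vectors orthogonal to the constants, because
  \<open>\<parallel>A y\<parallel>\<^sup>2\<^sup>M \<le> \<parallel>A\<^sup>M y\<parallel>\<^sup>2 \<parallel>y\<parallel>\<^sup>2\<^sup>M\<^sup>-\<^sup>2\<close> for \<open>M = 2\<^sup>j\<close> and only the
  \<open>(n - 1)\<^sup>1\<^sup>/\<^sup>M\<close>-th root of the constant survives in the limit.\<close>
lemma inner_matrix_vector_le_if_trace_bound:
  fixes A :: "real^'n::finite^'n"
  assumes sym: "transpose A = A" and rows: "\<And>i. (\<Sum>j\<in>UNIV. A $ i $ j) = d"
    and tr: "\<And>m. m \<ge> 1 \<Longrightarrow> trace (matrix_power A (2 * m)) \<le> d ^ (2 * m) + (real CARD('n) - 1) * lam ^ (2 * m)"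
    and y: "(\<Sum>i\<in>UNIV. y $ i) = 0"
  shows "(A *v y) \<bullet> (A *v y) \<le> lam\<^sup>2 * (y \<bullet> y)"
proof (rule le_if_two_power_powers_le[where C = "real CARD('n) - 1"])
  fix j :: nat
  let ?m = "2 ^ j :: nat"
  let ?P = "matrix_power A ?m"
  have P_rows: "(\<Sum>l\<in>UNIV. ?P $ i $ l) = d ^ ?m" for i by (rule row_sum_matrix_power[OF rows])
  have "((A *v y) \<bullet> (A *v y)) ^ ?m \<le> (?P *v y) \<bullet> (?P *v y) * (y \<bullet> y) ^ (?m - 1)"
    by (rule inner_self_pow_two_power_le[OF sym])
  also have "\<dots> \<le> ((trace (?P ** ?P) - (d ^ ?m)\<^sup>2) * (y \<bullet> y)) * (y \<bullet> y) ^ (?m - 1)"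
    by (intro mult_right_mono inner_matrix_vector_sum_zero_le[OF transpose_matrix_power[OF sym] P_rows y])
      simp
  also have "\<dots> \<le> (((real CARD('n) - 1) * lam ^ (2 * ?m)) * (y \<bullet> y)) * (y \<bullet> y) ^ (?m - 1)"
    using tr[of ?m] by (intro mult_right_mono) (simp_all add: mult_2 power_mult_distrib
        power_add[symmetric] power2_eq_square flip: matrix_power_add)
  also have "\<dots> = (real CARD('n) - 1) * (lam\<^sup>2 * (y \<bullet> y)) ^ ?m"
  proof -
    have "(y \<bullet> y) * (y \<bullet> y) ^ (?m - 1) = (y \<bullet> y) ^ ?m"
      by (simp add: power_eq_if[of _ ?m])
    then show ?thesis by (simp add: power_mult_distrib power_mult mult.assoc)
  qed
  finally show "((A *v y) \<bullet> (A *v y)) ^ ?m \<le> (real CARD('n) - 1) * (lam\<^sup>2 * (y \<bullet> y)) ^ ?m" .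
qed simp_all

lemma centered_indicator:
  fixes S :: "'n::finite set"
  defines "x \<equiv> (\<chi> i. if i \<in> S then 1 else (0::real)) - (real (card S) / real CARD('n)) *\<^sub>R 1"
  shows "(\<Sum>i\<in>UNIV. x $ i) = 0" and "x \<bullet> x \<le> real (card S)"
proof -
  define s where "s = real (card S)"
  define n where "n = real CARD('n)"
  have n: "n > 0" by (simp add: n_def)
  have ind: "(\<Sum>i\<in>UNIV. (if i \<in> S then 1 else 0 :: real)) = s"
    by (simp add: s_def sum.If_cases)
  have x: "x $ i = (if i \<in> S then 1 else 0) - s / n" for i
    by (simp add: x_def s_def n_def)
  show "(\<Sum>i\<in>UNIV. x $ i) = 0"
    using n by (simp add: x sum_subtractf ind n_def)
  have "x \<bullet> x = (\<Sum>i\<in>UNIV. (if i \<in> S then 1 else 0) - 2 * (s / n) * (if i \<in> S then 1 else 0) + (s / n)\<^sup>2)"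
    unfolding inner_vec_real x by (intro sum.cong) (auto simp: power2_eq_square algebra_simps)
  also have "\<dots> = s - 2 * (s / n) * s + n * (s / n)\<^sup>2"
    by (simp only: sum.distrib sum_subtractf sum_distrib_left[symmetric] sum_constant ind)
      (simp add: n_def)
  also have "\<dots> = s - s\<^sup>2 / n"
    using n by (simp add: power2_eq_square field_simps)
  finally show "x \<bullet> x \<le> real (card S)" using n by (simp add: s_def)
qed

lemma matrix_mixing:
  fixes A :: "real^'n::finite^'n" and S T :: "'n set"
  assumes sym: "transpose A = A" and rows: "\<And>i. (\<Sum>j\<in>UNIV. A $ i $ j) = d"
    and bound: "\<And>y. (\<Sum>i\<in>UNIV. y $ i) = 0 \<Longrightarrow> (A *v y) \<bullet> (A *v y) \<le> lam\<^sup>2 * (y \<bullet> y)"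
    and lam: "0 \<le> lam"
  shows "(\<Sum>x\<in>S. \<Sum>y\<in>T. A $ x $ y)
    \<le> d * real (card S) * real (card T) / real CARD('n) + lam * sqrt (real (card S) * real (card T))"
proof -
  define n s t where "n = real CARD('n)" and "s = real (card S)" and "t = real (card T)"
  define iS iT :: "real^'n" where "iS = (\<chi> i. if i \<in> S then 1 else 0)" and "iT = (\<chi> i. if i \<in> T then 1 else 0)"
  define xS yT :: "real^'n" where "xS = iS - (s / n) *\<^sub>R 1" and "yT = iT - (t / n) *\<^sub>R 1"
  have xS: "(\<Sum>i\<in>UNIV. xS $ i) = 0" "xS \<bullet> xS \<le> s"
    using centered_indicator[of S] by (simp_all add: xS_def iS_def s_def n_def)
  have yT: "(\<Sum>i\<in>UNIV. yT $ i) = 0" "yT \<bullet> yT \<le> t"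
    using centered_indicator[of T] by (simp_all add: yT_def iT_def t_def n_def)
  have one_inner: "1 \<bullet> v = (\<Sum>i\<in>UNIV. v $ i)" for v :: "real^'n"
    by (simp add: inner_vec_real)
  have A_one: "A *v 1 = d *\<^sub>R 1"
    unfolding Finite_Cartesian_Product.vec_eq_iff by (simp add: matrix_vector_mult_def rows)
  have indicator_sum: "(\<Sum>i\<in>UNIV. (if i \<in> U then 1 else 0) * g i) = (\<Sum>i\<in>U. g i)"
    for U and g :: "'n \<Rightarrow> real"
    by (simp add: if_distrib[of "\<lambda>c. c * _"] sum.If_cases)
  have "(A *v iT) $ x = (\<Sum>y\<in>T. A $ x $ y)" for x
    using indicator_sum[of T "\<lambda>y. A $ x $ y"]
    by (simp add: matrix_vector_mult_def iT_def mult.commute)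
  then have "(\<Sum>x\<in>S. \<Sum>y\<in>T. A $ x $ y) = iS \<bullet> (A *v iT)"
    by (simp add: inner_vec_real iS_def indicator_sum)
  also have "\<dots> = xS \<bullet> (A *v yT) + s / n * (1 \<bullet> (A *v yT)) + t / n * d * (iS \<bullet> 1)"
    by (simp add: xS_def yT_def matrix_vector_right_distrib matrix_vector_mult_diff_distrib
        matrix_vector_mult_scaleR A_one inner_diff_left inner_diff_right algebra_simps)
  also have "1 \<bullet> (A *v yT) = 0"
    using yT(1) by (simp add: inner_matrix_vector_symmetric[OF sym, symmetric] A_one one_inner)
  also have "iS \<bullet> 1 = s"
    by (simp add: inner_commute one_inner iS_def s_def sum.If_cases)
  also have "xS \<bullet> (A *v yT) \<le> lam * sqrt (s * t)"
  proof -
    have "xS \<bullet> (A *v yT) \<le> sqrt (xS \<bullet> xS) * sqrt ((A *v yT) \<bullet> (A *v yT))"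
      using norm_cauchy_schwarz[of xS "A *v yT"] by (simp add: norm_eq_sqrt_inner)
    also have "\<dots> \<le> sqrt s * sqrt (lam\<^sup>2 * t)"
      using xS(2) order.trans[OF bound[OF yT(1)] mult_left_mono[OF yT(2)]]
      by (intro mult_mono real_sqrt_le_mono) (simp_all add: s_def)
    also have "\<dots> = lam * sqrt (s * t)"
      using lam by (simp add: real_sqrt_mult)
    finally show ?thesis .
  qed
  finally show ?thesis by (simp add: n_def s_def t_def algebra_simps)
qed

lemma abs_root_le_row_sum:
  fixes A :: "real^'n::finite^'n"
  assumes nonneg: "\<And>i j. 0 \<le> A $ i $ j" and rows: "\<And>i. (\<Sum>j\<in>UNIV. A $ i $ j) = d"
    and tr: "\<And>k. trace (matrix_power A k) = (\<Sum>e\<leftarrow>es. e ^ k)" and e: "e \<in> set es"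
  shows "\<bar>e\<bar> \<le> d"
proof -
  have d: "0 \<le> d"
    unfolding rows[symmetric, of undefined] by (intro sum_nonneg nonneg)
  have trace_le: "trace (matrix_power A k) \<le> real CARD('n) * d ^ k" for k
  proof -
    have "matrix_power A k $ i $ i \<le> d ^ k" for i
      using member_le_sum[of i UNIV "\<lambda>j. matrix_power A k $ i $ j"]
      by (simp add: matrix_power_nonneg[OF nonneg] row_sum_matrix_power[OF rows])
    then have "trace (matrix_power A k) \<le> (\<Sum>i\<in>(UNIV :: 'n set). d ^ k)"
      unfolding trace_def by (rule sum_mono)
    then show ?thesis by simp
  qed
  have "(e\<^sup>2) ^ (2 ^ j) \<le> real CARD('n) * (d\<^sup>2) ^ (2 ^ j)" for j
  proof -
    have "(e\<^sup>2) ^ (2 ^ j) \<le> (\<Sum>e\<leftarrow>es. e ^ (2 * 2 ^ j))"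
      unfolding power_mult by (rule member_le_sum_list) (use e in \<open>auto intro: zero_le_power\<close>)
    also have "\<dots> = trace (matrix_power A (2 * 2 ^ j))" by (rule tr[symmetric])
    also have "\<dots> \<le> real CARD('n) * d ^ (2 * 2 ^ j)" by (rule trace_le)
    finally show ?thesis by (simp add: power_mult)
  qed
  then have "e\<^sup>2 \<le> d\<^sup>2" by (rule le_if_two_power_powers_le[OF zero_le_power2 zero_le_power2])
  then show ?thesis using power2_le_imp_le[of "\<bar>e\<bar>" d] d by simp
qed

lemma adj_matrix_regular:
  assumes "regular_graph adj d"
  shows "transpose (adj_matrix adj) = adj_matrix adj"
    and "\<And>i. (\<Sum>j\<in>UNIV. adj_matrix adj $ i $ j) = real d"
    and "\<And>i j. 0 \<le> adj_matrix adj $ i $ j"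
  using assms
  by (auto simp: regular_graph_def adj_matrix_def transpose_def Finite_Cartesian_Product.vec_eq_iff
      sum.If_cases)

lemma trace_even_power_le_expansion:
  fixes adj :: "'n::finite \<Rightarrow> 'n \<Rightarrow> bool"
  assumes graph: "regular_graph adj d" and n2: "CARD('n) \<ge> 2" and m: "m \<ge> 1"
  shows "trace (matrix_power (adj_matrix adj) (2 * m))
    \<le> real d ^ (2 * m) + (real CARD('n) - 1) * expansion adj ^ (2 * m)"
proof -
  let ?n = "CARD('n)"
  obtain es where len: "length es = ?n" and roots: "proots (char_poly_mat (adj_matrix adj)) = mset es"
    and tr: "\<And>k. trace (matrix_power (adj_matrix adj) k) = (\<Sum>e\<leftarrow>es. e ^ k)"
    using symmetric_matrix_spectrum[OF adj_matrix_regular(1)[OF graph]] by blast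
  define xs where "xs = adj_eigenvalues adj"
  have xs: "xs = sort es" "length xs = ?n" "sorted xs"
    using len by (simp_all add: xs_def adj_eigenvalues_def roots)
  have lam: "expansion adj = max (xs ! (?n - 2)) \<bar>xs ! 0\<bar>"
    by (simp add: expansion_def xs_def)
  have even_abs: "e ^ (2 * m) = \<bar>e\<bar> ^ (2 * m)" for e :: real
    by (simp add: power_even_abs)
  obtain k where k: "?n = Suc k" using n2 by (cases ?n) simp_all
  have "trace (matrix_power (adj_matrix adj) (2 * m)) = (\<Sum>e\<leftarrow>xs. e ^ (2 * m))"
    unfolding tr xs(1) by (simp only: sum_mset_sum_list[symmetric] mset_map mset_sort)
  also have "\<dots> = (\<Sum>i<?n. xs ! i ^ (2 * m))"
    by (simp add: sum_list_sum_nth xs(2) lessThan_atLeast0)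
  also have "\<dots> = (\<Sum>i<?n - 1. xs ! i ^ (2 * m)) + xs ! (?n - 1) ^ (2 * m)"
    unfolding k by simp
  also have "\<dots> \<le> (\<Sum>i<?n - 1. expansion adj ^ (2 * m)) + real d ^ (2 * m)"
  proof (intro add_mono sum_mono)
    fix i assume "i \<in> {..<?n - 1}"
    then have "xs ! 0 \<le> xs ! i" "xs ! i \<le> xs ! (?n - 2)"
      using xs n2 by (auto intro: sorted_nth_mono)
    then have "\<bar>xs ! i\<bar> \<le> expansion adj" unfolding lam by linarith
    then show "xs ! i ^ (2 * m) \<le> expansion adj ^ (2 * m)"
      unfolding even_abs[of "xs ! i"] by (rule power_mono) simp
  next
    have "xs ! (?n - 1) \<in> set es" using xs k by (metis lessI diff_Suc_1 nth_mem set_sort)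
    then have "\<bar>xs ! (?n - 1)\<bar> \<le> real d"
      by (rule abs_root_le_row_sum[OF adj_matrix_regular(3,2)[OF graph] tr])
    then show "xs ! (?n - 1) ^ (2 * m) \<le> real d ^ (2 * m)"
      unfolding even_abs[of "xs ! (?n - 1)"] by (rule power_mono) simp
  qed
  finally show ?thesis using n2 by (simp add: of_nat_diff)
qed

theorem expander_mixing_lemma:
  fixes adj :: "'n::finite \<Rightarrow> 'n \<Rightarrow> bool" and S T :: "'n set"
  assumes graph: "regular_graph adj d" and n2: "CARD('n) \<ge> 2"
  shows "real (card {(x, y). adj x y \<and> x \<in> S \<and> y \<in> T})
    \<le> real d * real (card S) * real (card T) / real CARD('n)
      + expansion adj * sqrt (real (card S) * real (card T))"
proof -
  let ?A = "adj_matrix adj"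
  note A = adj_matrix_regular[OF graph]
  have "(?A *v y) \<bullet> (?A *v y) \<le> (expansion adj)\<^sup>2 * (y \<bullet> y)" if "(\<Sum>i\<in>UNIV. y $ i) = 0" for y
    using A(1,2) trace_even_power_le_expansion[OF graph n2] that
    by (rule inner_matrix_vector_le_if_trace_bound)
  then have "(\<Sum>x\<in>S. \<Sum>y\<in>T. ?A $ x $ y)
    \<le> real d * real (card S) * real (card T) / real CARD('n) + expansion adj * sqrt (real (card S) * real (card T))"
    by (intro matrix_mixing[OF A(1,2)]) (simp_all add: expansion_def le_max_iff_disj)
  moreover have "{(x, y). adj x y \<and> x \<in> S \<and> y \<in> T} = Sigma S (\<lambda>x. {y \<in> T. adj x y})"
    by auto
  then have "card {(x, y). adj x y \<and> x \<in> S \<and> y \<in> T} = (\<Sum>x\<in>S. card {y \<in> T. adj x y})"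
    by (simp add: card_SigmaI)
  ultimately show ?thesis by (simp add: adj_matrix_def sum.If_cases Int_def)
qed

lemma dc_edge_eq_iff:
  "dc_edge (s, x) u = dc_edge (s', y) u' \<longleftrightarrow> (s' = s \<and> y = x \<and> u' = u) \<or> (s' \<noteq> s \<and> y = u \<and> u' = x)"
  by (cases s; cases s') (auto simp: dc_edge_def)

lemma dc_edge_inj: "dc_edge v u = dc_edge v u' \<Longrightarrow> u = u'"
  by (cases v) (auto simp: dc_edge_eq_iff)

lemma dc_edge_in_incident_iff:
  "dc_edge (s, x) u \<in> incident adj w \<longleftrightarrow> (w = (s, x) \<and> adj x u) \<or> (w = (\<not> s, u) \<and> adj u x)"
proof (cases w)
  case (Pair s' y)
  have "dc_edge (s, x) u \<in> incident adj w \<longleftrightarrow> (\<exists>u'. adj y u' \<and> dc_edge (s, x) u = dc_edge (s', y) u')"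
    by (auto simp: incident_def Pair)
  also have "\<dots> \<longleftrightarrow> (w = (s, x) \<and> adj x u) \<or> (w = (\<not> s, u) \<and> adj u x)"
    unfolding dc_edge_eq_iff Pair by (cases s; cases s') auto
  finally show ?thesis .
qed

lemma dc_edge_in_dc_edges_iff:
  assumes "\<And>u v. adj u v \<Longrightarrow> adj v u"
  shows "dc_edge (s, x) u \<in> dc_edges adj \<longleftrightarrow> adj x u"
  using assms by (cases s) (auto simp: dc_edge_def dc_edges_def)

lemma card_Union_dc_edge_image:
  "card (\<Union>x\<in>X. dc_edge (s, x) ` F x) = (\<Sum>x\<in>X. card (F x))" for F :: "'n::finite \<Rightarrow> 'n set"
proof -
  have "card (\<Union>x\<in>X. dc_edge (s, x) ` F x) = (\<Sum>x\<in>X. card (dc_edge (s, x) ` F x))"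
    by (rule card_UN_disjoint) (auto simp: dc_edge_eq_iff)
  also have "\<dots> = (\<Sum>x\<in>X. card (F x))"
    by (intro sum.cong refl card_image inj_onI) (rule dc_edge_inj)
  finally show ?thesis .
qed

definition local_row :: "(bool \<times> 'n \<Rightarrow> (bit^'d) list) \<Rightarrow> bool \<times> 'n \<Rightarrow> 'd \<Rightarrow> bit list" where
  "local_row gs v i = map (\<lambda>g. g $ i) (gs v)"

lemma card_range_local_row: "card (range (local_row gs v)) \<le> 2 ^ length (gs v)"
proof -
  have "range (local_row gs v) \<subseteq> {xs. length xs = length (gs v)}"
    by (auto simp: local_row_def)
  moreover have "finite {xs :: bit list. length xs = length (gs v)}"
    using finite_lists_length_eq[of "UNIV :: bit set"] by simp
  ultimately have "card (range (local_row gs v)) \<le> card {xs :: bit list. length xs = length (gs v)}"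
    by (rule card_mono[rotated])
  then show ?thesis
    using card_lists_length_eq[of "UNIV :: bit set" "length (gs v)"] by (simp add: card_UNIV_bit)
qed

lemma local_equiv_iff:
  assumes "inj (Gam v)"
  shows "local_equiv gs Gam v (dc_edge v (Gam v i)) e'
    \<longleftrightarrow> (\<exists>j. e' = dc_edge v (Gam v j) \<and> local_row gs v j = local_row gs v i)"
proof -
  from assms have "dc_edge v (Gam v i) = dc_edge v (Gam v i') \<longleftrightarrow> i' = i" for i'
    by (metis dc_edge_inj injD)
  then show ?thesis unfolding local_equiv_def local_row_def by metis
qed

text \<open>A bookkeeping certificate for a partial run of FindHeavyEdges from \<open>E0\<close> to \<open>E1\<close>: every
  removed edge is charged to an endpoint \<open>w\<close> (the set \<open>D w\<close>), and the charges at \<open>w\<close> come from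
  removed local equivalence classes, identified by their common row \<open>\<in> P w\<close> of \<open>G_w\<close>, each of at
  most \<open>thr\<close> edges.\<close>
definition removal_charge ::
  "('n \<Rightarrow> 'n \<Rightarrow> bool) \<Rightarrow> real \<Rightarrow> (bool \<times> 'n \<Rightarrow> (bit^'d) list) \<Rightarrow> (bool \<times> 'n \<Rightarrow> 'd \<Rightarrow> 'n)
    \<Rightarrow> (bool \<times> 'n) set \<Rightarrow> ('n \<times> 'n) set \<Rightarrow> ('n \<times> 'n) set
    \<Rightarrow> (bool \<times> 'n \<Rightarrow> ('n \<times> 'n) set) \<Rightarrow> (bool \<times> 'n \<Rightarrow> bit list set) \<Rightarrow> bool" where
  "removal_charge adj thr gs Gam B E0 E1 D P \<longleftrightarrow>
     E1 \<subseteq> E0 \<and> E0 - E1 \<subseteq> (\<Union>w. D w) \<and> (\<forall>w. D w \<subseteq> incident adj w)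
     \<and> (\<forall>w. P w \<subseteq> range (local_row gs w)) \<and> (\<forall>w. real (card (D w)) \<le> real (card (P w)) * thr)
     \<and> (\<forall>w i. local_row gs w i \<in> P w \<longrightarrow> dc_edge w (Gam w i) \<notin> E1)
     \<and> (\<forall>w. P w \<noteq> {} \<longrightarrow> w \<notin> B)"

lemma removal_charge_remove_class:
  assumes inv: "removal_charge adj thr gs Gam B E0 E1 D P"
    and v: "v \<notin> B" and \<rho>: "\<rho> \<notin> P v" "\<rho> \<in> range (local_row gs v)"
    and R_inc: "R \<subseteq> incident adj v" and small: "real (card R) \<le> thr"
    and R: "\<And>j. dc_edge v (Gam v j) \<in> E1 \<Longrightarrow> local_row gs v j = \<rho> \<Longrightarrow> dc_edge v (Gam v j) \<in> R"
  shows "removal_charge adj thr gs Gam B E0 (E1 - R) (D(v := D v \<union> R)) (P(v := insert \<rho> (P v)))"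
proof -
  from inv have sub: "E1 \<subseteq> E0" and cover: "E0 - E1 \<subseteq> (\<Union>w. D w)"
    and D_inc: "\<And>w. D w \<subseteq> incident adj w" and P_rows: "\<And>w. P w \<subseteq> range (local_row gs w)"
    and D_card: "\<And>w. real (card (D w)) \<le> real (card (P w)) * thr"
    and P_gone: "\<And>w j. local_row gs w j \<in> P w \<Longrightarrow> dc_edge w (Gam w j) \<notin> E1"
    and P_good: "\<And>w. P w \<noteq> {} \<Longrightarrow> w \<notin> B"
    unfolding removal_charge_def by blast+
  define D' where "D' = D(v := D v \<union> R)"
  define P' where "P' = P(v := insert \<rho> (P v))"
  have "finite (P v)" using P_rows[of v] by (rule finite_subset) simp
  then have "real (card (P' v)) = real (card (P v)) + 1"
    using \<rho>(1) by (simp add: P'_def)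
  moreover have "real (card (D' v)) \<le> real (card (D v)) + real (card R)"
    using card_Un_le[of "D v" R] by (simp add: D'_def)
  ultimately have card_v: "real (card (D' v)) \<le> real (card (P' v)) * thr"
    using D_card[of v] small by (simp add: algebra_simps)
  have "E1 - R \<subseteq> E0" using sub by blast
  moreover have "E0 - (E1 - R) \<subseteq> (\<Union>w. D' w)"
    using cover by (auto simp: D'_def)
  moreover have "D' w \<subseteq> incident adj w" for w
    using D_inc R_inc by (cases "w = v") (simp_all add: D'_def)
  moreover have "P' w \<subseteq> range (local_row gs w)" for w
    using P_rows \<rho>(2) by (cases "w = v") (simp_all add: P'_def)
  moreover have "real (card (D' w)) \<le> real (card (P' w)) * thr" for w
    using D_card card_v by (cases "w = v") (simp_all add: D'_def P'_def)
  moreover have "dc_edge w (Gam w j) \<notin> E1 - R" if "local_row gs w j \<in> P' w" for w j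
  proof (cases "w = v \<and> local_row gs w j = \<rho>")
    case True
    then show ?thesis using R by blast
  next
    case False
    then have "local_row gs w j \<in> P w" using that by (auto simp: P'_def split: if_splits)
    then show ?thesis using P_gone by blast
  qed
  moreover have "w \<notin> B" if "P' w \<noteq> {}" for w
    using P_good v that by (cases "w = v") (simp_all add: P'_def)
  ultimately show ?thesis
    unfolding removal_charge_def D'_def P'_def by blast
qed

lemma removal_charge_fhe_step:
  fixes Gam :: "bool \<times> 'n \<Rightarrow> 'd::finite \<Rightarrow> 'n"
  assumes order: "\<forall>v. bij_betw (Gam v) UNIV {u. adj (snd v) u}"
    and E0: "E0 = dc_edges adj - (\<Union>v\<in>B. incident adj v)"
    and inv: "removal_charge adj thr gs Gam B E0 E1 D P"
    and step: "fhe_step adj thr gs Gam E1 E2"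
  shows "\<exists>D' P'. removal_charge adj thr gs Gam B E0 E2 D' P'"
proof -
  from step obtain v e where e: "e \<in> E1" "e \<in> incident adj v"
    and small: "real (card {e' \<in> E1. local_equiv gs Gam v e e'}) \<le> thr"
    and E2: "E2 = E1 - {e' \<in> E1. local_equiv gs Gam v e e'}"
    unfolding fhe_step_def by blast
  define R where "R = {e' \<in> E1. local_equiv gs Gam v e e'}"
  obtain u where "adj (snd v) u" "e = dc_edge v u" using e(2) by (auto simp: incident_def)
  then obtain i where i: "e = dc_edge v (Gam v i)"
    using order unfolding bij_betw_def by (metis (mono_tags) imageE mem_Collect_eq)
  have "inj (Gam v)" using order bij_betw_def by blast
  then have R: "e' \<in> R \<longleftrightarrow> e' \<in> E1 \<and> (\<exists>j. e' = dc_edge v (Gam v j) \<and> local_row gs v j = local_row gs v i)"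
    for e'
    unfolding R_def i by (simp add: local_equiv_iff)
  have "Gam v j \<in> {u. adj (snd v) u}" for j
    using bij_betwE[OF spec[OF order, of v]] by blast
  then have "R \<subseteq> incident adj v" using R by (auto simp: incident_def)
  moreover have "local_row gs v i \<notin> P v" and "v \<notin> B"
    using inv e i E0 unfolding removal_charge_def by blast+
  ultimately have "removal_charge adj thr gs Gam B E0 (E1 - R) (D(v := D v \<union> R))
      (P(v := insert (local_row gs v i) (P v)))"
    using small R unfolding R_def[symmetric]
    by (intro removal_charge_remove_class[OF inv]) auto
  then show ?thesis unfolding E2 R_def[symmetric] by blast
qed

lemma removal_charge_fhe_run:
  fixes Gam :: "bool \<times> 'n \<Rightarrow> 'd::finite \<Rightarrow> 'n"
  assumes order: "\<forall>v. bij_betw (Gam v) UNIV {u. adj (snd v) u}"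
    and E0: "E0 = dc_edges adj - (\<Union>v\<in>B. incident adj v)"
    and run: "(fhe_step adj thr gs Gam)\<^sup>*\<^sup>* E0 E1"
  shows "\<exists>D P. removal_charge adj thr gs Gam B E0 E1 D P"
  using run
proof (induction rule: rtranclp_induct)
  case base
  have "removal_charge adj thr gs Gam B E0 E0 (\<lambda>_. {}) (\<lambda>_. {})"
    by (simp add: removal_charge_def)
  then show ?case by blast
next
  case (step E1 E2)
  then show ?case using removal_charge_fhe_step[OF order E0] by blast
qed

lemma fhe_removed_edges_charged:
  fixes Gam :: "bool \<times> 'n \<Rightarrow> 'd::finite \<Rightarrow> 'n"
  assumes order: "\<forall>v. bij_betw (Gam v) UNIV {u. adj (snd v) u}"
    and E0: "E0 = dc_edges adj - (\<Union>v\<in>B. incident adj v)"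
    and run: "(fhe_step adj thr gs Gam)\<^sup>*\<^sup>* E0 E1" and thr: "0 \<le> thr"
    and len: "\<And>w. w \<notin> B \<Longrightarrow> length (gs w) \<le> r"
  obtains D where "E0 - E1 \<subseteq> (\<Union>w. D w)" and "\<And>w. D w \<subseteq> incident adj w"
    and "\<And>w. real (card (D w)) \<le> 2 ^ r * thr"
proof -
  obtain D P where "removal_charge adj thr gs Gam B E0 E1 D P"
    using removal_charge_fhe_run[OF order E0 run] by blast
  then have cover: "E0 - E1 \<subseteq> (\<Union>w. D w)" and D_inc: "\<And>w. D w \<subseteq> incident adj w"
    and P_rows: "\<And>w. P w \<subseteq> range (local_row gs w)"
    and D_card: "\<And>w. real (card (D w)) \<le> real (card (P w)) * thr"
    and P_good: "\<And>w. P w \<noteq> {} \<Longrightarrow> w \<notin> B"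
    unfolding removal_charge_def by blast+
  have "card (P w) \<le> 2 ^ r" for w
  proof (cases "P w = {}")
    case False
    have "card (P w) \<le> card (range (local_row gs w))"
      using P_rows by (rule card_mono[rotated]) simp
    also have "\<dots> \<le> 2 ^ length (gs w)" by (rule card_range_local_row)
    also have "\<dots> \<le> 2 ^ r" using len[OF P_good[OF False]] by (simp add: power_increasing)
    finally show ?thesis .
  qed simp
  then have "real (card (P w)) * thr \<le> 2 ^ r * thr" for w
    using thr by (intro mult_right_mono) (simp_all flip: of_nat_le_iff)
  then have "real (card (D w)) \<le> 2 ^ r * thr" for w
    using D_card[of w] by (meson order.trans)
  with cover D_inc show thesis by (rule that)
qed

lemma card_bad_side_le:
  fixes adj :: "'n::finite \<Rightarrow> 'n \<Rightarrow> bool"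
  assumes sym: "\<And>u v. adj u v \<Longrightarrow> adj v u" and t: "t > 0"
    and erasures: "real (card {e \<in> dc_edges adj. z e = None}) \<le> c * t"
  shows "real (card {x. (s, x) \<in> bad_set adj t z}) \<le> c"
proof -
  let ?X = "{x. (s, x) \<in> bad_set adj t z}"
  define F where "F x = {u. adj x u \<and> z (dc_edge (s, x) u) = None}" for x
  have "real (card ?X) * t \<le> (\<Sum>x\<in>?X. real (card (F x)))"
    by (rule sum_bounded_below) (simp add: bad_set_def F_def less_imp_le)
  also have "\<dots> = real (card (\<Union>x\<in>?X. dc_edge (s, x) ` F x))"
    by (simp add: card_Union_dc_edge_image)
  also have "\<dots> \<le> real (card {e \<in> dc_edges adj. z e = None})"
    using dc_edge_in_dc_edges_iff[of adj, OF sym] by (intro of_nat_mono card_mono) (auto simp: F_def)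
  finally have "real (card ?X) * t \<le> c * t" using erasures by linarith
  then show ?thesis using t by simp
qed

lemma removed_edge_cases:
  assumes sym: "\<And>u v. adj u v \<Longrightarrow> adj v u"
    and E0: "E0 = dc_edges adj - (\<Union>v\<in>B. incident adj v)"
    and cover: "E0 - E' \<subseteq> (\<Union>w. D w)" and D_inc: "\<And>w. D w \<subseteq> incident adj w"
    and x: "(s, x) \<notin> B" and u: "adj x u" "dc_edge (s, x) u \<notin> E'"
  shows "(\<not> s, u) \<in> B \<or> dc_edge (s, x) u \<in> D (s, x) \<or> dc_edge (s, x) u \<in> D (\<not> s, u)"
proof (cases "dc_edge (s, x) u \<in> E0")
  case True
  then obtain w where "dc_edge (s, x) u \<in> D w" using cover u(2) by blast
  moreover from this have "w = (s, x) \<or> w = (\<not> s, u)"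
    using D_inc[of w] dc_edge_in_incident_iff[of s x u adj w] by blast
  ultimately show ?thesis by blast
next
  case False
  then obtain w where "w \<in> B" "dc_edge (s, x) u \<in> incident adj w"
    using E0 dc_edge_in_dc_edges_iff[of adj, OF sym] u(1) by blast
  then show ?thesis using x by (auto simp: dc_edge_in_incident_iff)
qed

lemma sum_removed_edges_le:
  fixes adj :: "'n::finite \<Rightarrow> 'n \<Rightarrow> bool"
  assumes sym: "\<And>u v. adj u v \<Longrightarrow> adj v u"
    and E0: "E0 = dc_edges adj - (\<Union>v\<in>B. incident adj v)"
    and cover: "E0 - E' \<subseteq> (\<Union>w. D w)" and D_inc: "\<And>w. D w \<subseteq> incident adj w"
    and D_card: "\<And>w. real (card (D w)) \<le> K" and S: "\<And>x. x \<in> S \<Longrightarrow> (s, x) \<notin> B"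
  shows "(\<Sum>x\<in>S. real (card {u. adj x u \<and> dc_edge (s, x) u \<notin> E'}))
    \<le> real (card {(x, y). adj x y \<and> x \<in> S \<and> (\<not> s, y) \<in> B}) + real (card S) * K + real CARD('n) * K"
proof -
  define c1 where "c1 x = {u. adj x u \<and> (\<not> s, u) \<in> B}" for x
  define c2 where "c2 x = {u. dc_edge (s, x) u \<in> D (s, x)}" for x
  define c3 where "c3 x = {u. adj x u \<and> dc_edge (s, x) u \<in> D (\<not> s, u)}" for x
  have "real (card {u. adj x u \<and> dc_edge (s, x) u \<notin> E'})
      \<le> real (card (c1 x)) + real (card (c2 x)) + real (card (c3 x))" if "x \<in> S" for x
  proof -
    have "card {u. adj x u \<and> dc_edge (s, x) u \<notin> E'} \<le> card (c1 x \<union> c2 x \<union> c3 x)"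
      using removed_edge_cases[OF sym E0 cover D_inc S[OF that]]
      by (intro card_mono) (auto simp: c1_def c2_def c3_def)
    then show ?thesis
      using card_Un_le[of "c1 x \<union> c2 x" "c3 x"] card_Un_le[of "c1 x" "c2 x"] by linarith
  qed
  then have "(\<Sum>x\<in>S. real (card {u. adj x u \<and> dc_edge (s, x) u \<notin> E'}))
      \<le> (\<Sum>x\<in>S. real (card (c1 x)) + real (card (c2 x)) + real (card (c3 x)))"
    by (rule sum_mono)
  then have split: "(\<Sum>x\<in>S. real (card {u. adj x u \<and> dc_edge (s, x) u \<notin> E'}))
      \<le> (\<Sum>x\<in>S. real (card (c1 x))) + (\<Sum>x\<in>S. real (card (c2 x))) + (\<Sum>x\<in>S. real (card (c3 x)))"
    by (simp only: sum.distrib)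
  have "{(x, y). adj x y \<and> x \<in> S \<and> (\<not> s, y) \<in> B} = Sigma S c1" by (auto simp: c1_def)
  moreover have "card (Sigma S c1) = (\<Sum>x\<in>S. card (c1 x))" by (rule card_SigmaI) simp_all
  ultimately have sum1: "(\<Sum>x\<in>S. real (card (c1 x))) = real (card {(x, y). adj x y \<and> x \<in> S \<and> (\<not> s, y) \<in> B})"
    by (simp only: of_nat_sum)
  have "real (card (c2 x)) \<le> K" for x
  proof -
    have "card (c2 x) \<le> card (D (s, x))"
      by (rule card_inj_on_le[of "dc_edge (s, x)"]) (auto simp: c2_def intro: inj_onI dc_edge_inj)
    then show ?thesis using D_card[of "(s, x)"] by linarith
  qed
  then have sum2: "(\<Sum>x\<in>S. real (card (c2 x))) \<le> real (card S) * K"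
    using sum_bounded_above[of S "\<lambda>x. real (card (c2 x))" K] by simp
  have "(\<Sum>x\<in>S. card (c3 x)) = card (\<Union>x\<in>S. dc_edge (s, x) ` c3 x)"
    by (rule card_Union_dc_edge_image[symmetric])
  also have "\<dots> \<le> card (\<Union>u. D (\<not> s, u))"
    by (rule card_mono) (auto simp: c3_def)
  also have "\<dots> \<le> (\<Sum>u\<in>UNIV. card (D (\<not> s, u)))"
    by (rule card_UN_le) simp
  finally have "(\<Sum>x\<in>S. real (card (c3 x))) \<le> (\<Sum>u\<in>UNIV. real (card (D (\<not> s, u))))"
    by (simp flip: of_nat_sum)
  also have "\<dots> \<le> real CARD('n) * K"
    using sum_bounded_above[of UNIV "\<lambda>u. real (card (D (\<not> s, u)))" K] D_card by simp
  finally show ?thesis using split sum1 sum2 by linarith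
qed

lemma edge_count_arith:
  fixes e a b n d \<delta> \<epsilon> lam :: real
  assumes e: "e \<le> d * a * b / n + lam * sqrt (a * b)"
    and a: "0 \<le> a" "a \<le> (1 - \<epsilon>/2) * \<delta> * n" and b: "0 \<le> b" "b \<le> (1 - \<epsilon>/2) * \<delta> * n"
    and n: "0 < n" and d: "0 < d" and \<delta>: "0 < \<delta>" "\<delta> \<le> 1" and \<epsilon>: "0 < \<epsilon>" "\<epsilon> \<le> 1"
    and lam: "0 \<le> lam" "lam \<le> d * \<epsilon>\<^sup>2 * \<delta>\<^sup>2 / 32"
  shows "e \<le> (1 - \<epsilon>/4) * (\<delta> - lam / d) * \<delta> * n * d"
proof -
  define \<beta> where "\<beta> = (1 - \<epsilon>/2) * \<delta>"
  define L where "L = lam / d"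
  have \<beta>: "0 \<le> \<beta>" "\<beta> \<le> \<delta>" using \<epsilon> \<delta> by (auto simp: \<beta>_def)
  have L: "0 \<le> L" "L \<le> \<epsilon>\<^sup>2 * \<delta>\<^sup>2 / 32" using lam d by (simp_all add: L_def field_simps)
  have ab: "a * b \<le> (\<beta> * n)\<^sup>2"
    using a b by (simp add: power2_eq_square mult_mono \<beta>_def)
  then have "sqrt (a * b) \<le> \<beta> * n" using real_sqrt_le_mono[OF ab] \<beta> n by simp
  then have "lam * sqrt (a * b) \<le> lam * (\<beta> * n)" using lam(1) by (rule mult_left_mono)
  moreover have "d * a * b / n \<le> d * (\<beta> * n)\<^sup>2 / n"
    using mult_left_mono[OF ab] d n by (simp add: mult.assoc divide_right_mono)
  ultimately have "e \<le> d * (\<beta> * n)\<^sup>2 / n + lam * (\<beta> * n)" using e by linarith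
  also have "\<dots> = n * d * (\<beta>\<^sup>2 + L * \<beta>)"
    using n d by (simp add: L_def power2_eq_square field_simps)
  also have "\<beta>\<^sup>2 + L * \<beta> \<le> (1 - \<epsilon>/4) * (\<delta> - L) * \<delta>"
  proof -
    have "\<beta>\<^sup>2 \<le> \<delta>\<^sup>2 * (1 - 3 * \<epsilon> / 4)"
    proof -
      have "\<epsilon>\<^sup>2 \<le> \<epsilon>" using \<epsilon> by (simp add: power2_eq_square mult_le_cancel_left1)
      then have "(1 - \<epsilon>/2)\<^sup>2 \<le> 1 - 3 * \<epsilon> / 4" by (simp add: power2_eq_square algebra_simps)
      then show ?thesis unfolding \<beta>_def power_mult_distrib using \<delta> by (simp add: mult.commute)
    qed
    moreover have "L * \<beta> + (1 - \<epsilon>/4) * L * \<delta> \<le> \<delta>\<^sup>2 * (\<epsilon> / 16)"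
    proof -
      have "L * \<beta> \<le> L * \<delta>" using \<beta>(2) L(1) by (rule mult_left_mono)
      moreover have "(1 - \<epsilon>/4) * (L * \<delta>) \<le> 1 * (L * \<delta>)"
        using \<epsilon> L \<delta> by (intro mult_right_mono) simp_all
      ultimately have "L * \<beta> + (1 - \<epsilon>/4) * L * \<delta> \<le> 2 * L * \<delta>" by simp
      also have "\<dots> \<le> 2 * (\<epsilon>\<^sup>2 * \<delta>\<^sup>2 / 32) * \<delta>" using L(2) \<delta> by (simp add: mult.commute)
      also have "\<dots> = \<delta>\<^sup>2 * (\<epsilon> / 16) * (\<epsilon> * \<delta>)" by (simp add: power2_eq_square)
      also have "\<dots> \<le> \<delta>\<^sup>2 * (\<epsilon> / 16)"
        using \<epsilon> \<delta> by (intro mult_left_le) (simp_all add: mult_le_one)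
      finally show ?thesis .
    qed
    moreover have "\<delta>\<^sup>2 * (1 - 3 * \<epsilon> / 4) + \<delta>\<^sup>2 * (\<epsilon> / 16) \<le> \<delta>\<^sup>2 * (1 - \<epsilon>/4)"
      using \<epsilon> by (simp add: algebra_simps)
    ultimately have "\<beta>\<^sup>2 + L * \<beta> + (1 - \<epsilon>/4) * L * \<delta> \<le> \<delta>\<^sup>2 * (1 - \<epsilon>/4)"
      by linarith
    moreover have "(1 - \<epsilon>/4) * (\<delta> - L) * \<delta> = \<delta>\<^sup>2 * (1 - \<epsilon>/4) - (1 - \<epsilon>/4) * L * \<delta>"
      by (simp add: power2_eq_square left_diff_distrib right_diff_distrib)
    ultimately show ?thesis by linarith
  qed
  finally show ?thesis
    using n d by (simp add: L_def mult_left_mono algebra_simps)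
qed

lemma excess_count_arith:
  fixes s b n d E K \<delta> \<epsilon> lam :: real
  assumes count: "s * (\<delta> * d) \<le> E + s * K + n * K"
    and mix: "E \<le> d * s * b / n + lam * sqrt (s * b)"
    and b: "0 \<le> b" "b \<le> (1 - \<epsilon>) * \<delta> * n" and s: "0 \<le> s" "s \<le> n"
    and n: "0 < n" and d: "0 < d" and \<delta>: "0 < \<delta>" "\<delta> \<le> 1" and \<epsilon>: "0 < \<epsilon>" "\<epsilon> \<le> 1"
    and lam: "0 \<le> lam" "lam \<le> d * \<epsilon>\<^sup>2 * \<delta>\<^sup>2 / 32" and K: "K = \<epsilon>\<^sup>2 * \<delta>\<^sup>2 * d / 8"
  shows "s \<le> \<epsilon> * \<delta> * n / 2"
proof -
  define t where "t = \<epsilon> * \<delta>"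
  have t: "0 < t" "t \<le> 1" using \<epsilon> \<delta> by (auto simp: t_def mult_le_one)
  have "(1 - \<epsilon>) * \<delta> \<le> 1" using \<epsilon> \<delta> by (simp add: mult_le_one)
  then have "(1 - \<epsilon>) * \<delta> * n \<le> 1 * n" using n by (intro mult_right_mono) auto
  then have "b \<le> n" using b by simp
  have "d * s * b / n \<le> d * s * ((1 - \<epsilon>) * \<delta>)"
  proof -
    have "b / n \<le> (1 - \<epsilon>) * \<delta>" using b n by (simp add: divide_le_eq mult.commute)
    then have "(d * s) * (b / n) \<le> (d * s) * ((1 - \<epsilon>) * \<delta>)" using d s by (intro mult_left_mono) auto
    then show ?thesis by simp
  qed
  moreover have "lam * sqrt (s * b) \<le> (d * \<epsilon>\<^sup>2 * \<delta>\<^sup>2 / 32) * n"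
  proof -
    have "s * b \<le> n * n" using s b \<open>b \<le> n\<close> by (intro mult_mono) auto
    then have "sqrt (s * b) \<le> n" using n real_sqrt_le_mono[of "s * b" "n * n"] by simp
    then show ?thesis using lam s b by (intro mult_mono) auto
  qed
  ultimately have "s * (\<delta> * d) \<le> d * s * ((1 - \<epsilon>) * \<delta>) + (d * \<epsilon>\<^sup>2 * \<delta>\<^sup>2 / 32) * n
      + s * (\<epsilon>\<^sup>2 * \<delta>\<^sup>2 * d / 8) + n * (\<epsilon>\<^sup>2 * \<delta>\<^sup>2 * d / 8)"
    using count[unfolded K] mix by linarith
  then have "d * (s * t) \<le> d * (t * t * (5 * n / 32 + s / 8))"
    by (simp add: t_def power2_eq_square algebra_simps)
  then have "s * t \<le> t * (t * (5 * n / 32 + s / 8))" using d by simp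
  then have "s \<le> t * (5 * n / 32 + s / 8)" using t by simp
  also have "\<dots> \<le> t * (5 * n / 32) + s / 8"
    using mult_right_mono[OF t(2), of "s / 8"] s by (simp add: distrib_left)
  finally have "s \<le> t * n * (5 / 28)" by (simp add: algebra_simps)
  also have "\<dots> \<le> t * n / 2" using t n by simp
  finally show ?thesis by (simp add: t_def)
qed

lemma card_heavy_side_le:
  fixes adj :: "'n::finite \<Rightarrow> 'n \<Rightarrow> bool" and s :: bool
  assumes graph: "regular_graph adj d" and n2: "CARD('n) \<ge> 2"
    and E0: "E0 = dc_edges adj - (\<Union>v\<in>bad_set adj t z. incident adj v)"
    and cover: "E0 - E' \<subseteq> (\<Union>w. D w)" and D_inc: "\<And>w. D w \<subseteq> incident adj w"
    and D_card: "\<And>w. real (card (D w)) \<le> \<epsilon>\<^sup>2 * \<delta>\<^sup>2 * real d / 8"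
    and t: "0 < t"
    and erasures: "real (card {e \<in> dc_edges adj. z e = None}) \<le> (1 - \<epsilon>) * \<delta> * real CARD('n) * t"
    and d: "0 < d" and \<delta>: "0 < \<delta>" "\<delta> \<le> 1" and \<epsilon>: "0 < \<epsilon>" "\<epsilon> \<le> 1"
    and lam: "expansion adj \<le> real d * \<epsilon>\<^sup>2 * \<delta>\<^sup>2 / 32"
  shows "real (card {x. \<delta> * real d < real (card {u. adj x u \<and> dc_edge (s, x) u \<notin> E'})})
    \<le> (1 - \<epsilon>/2) * \<delta> * real CARD('n)"
proof -
  define H where "H = {x. \<delta> * real d < real (card {u. adj x u \<and> dc_edge (s, x) u \<notin> E'})}"
  define B where "B = bad_set adj t z"
  define S where "S = H - {x. (s, x) \<in> B}"
  have sym: "\<And>u v. adj u v \<Longrightarrow> adj v u" using graph by (simp add: regular_graph_def)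
  have bad: "real (card {x. (s', x) \<in> B}) \<le> (1 - \<epsilon>) * \<delta> * real CARD('n)" for s'
    unfolding B_def by (rule card_bad_side_le[OF sym t erasures])
  have "real (card S) * (\<delta> * real d) \<le> (\<Sum>x\<in>S. real (card {u. adj x u \<and> dc_edge (s, x) u \<notin> E'}))"
    by (rule sum_bounded_below) (simp add: S_def H_def less_imp_le)
  also have "\<dots> \<le> real (card {(x, y). adj x y \<and> x \<in> S \<and> y \<in> {y. (\<not> s, y) \<in> B}})
      + real (card S) * (\<epsilon>\<^sup>2 * \<delta>\<^sup>2 * real d / 8) + real CARD('n) * (\<epsilon>\<^sup>2 * \<delta>\<^sup>2 * real d / 8)"
    using sum_removed_edges_le[OF sym E0[folded B_def] cover D_inc D_card, of S s] by (simp add: S_def)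
  finally have count: "real (card S) * (\<delta> * real d) \<le> real (card {(x, y). adj x y \<and> x \<in> S \<and> y \<in> {y. (\<not> s, y) \<in> B}})
      + real (card S) * (\<epsilon>\<^sup>2 * \<delta>\<^sup>2 * real d / 8) + real CARD('n) * (\<epsilon>\<^sup>2 * \<delta>\<^sup>2 * real d / 8)" .
  have "real (card S) \<le> \<epsilon> * \<delta> * real CARD('n) / 2"
    using bad[of "\<not> s"] d \<delta> \<epsilon> lam
    by (intro excess_count_arith[OF count expander_mixing_lemma[OF graph n2]])
      (simp_all add: card_mono expansion_def le_max_iff_disj)
  moreover have "card H \<le> card {x. (s, x) \<in> B} + card S"
    by (metis S_def Un_Diff_cancel card_Un_le card_mono finite sup_ge2 sup_commute order.trans)
  ultimately show ?thesis using bad[of s] unfolding H_def[symmetric] by (simp add: algebra_simps)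
qed

lemma card_erased_local_word:
  assumes "bij_betw (Gam v) UNIV {u. adj (snd v) u}"
  shows "card {i. local_word z Gam v $ i = None} = card {u. adj (snd v) u \<and> z (dc_edge v u) = None}"
proof -
  have "{u. adj (snd v) u \<and> z (dc_edge v u) = None} = Gam v ` {i. local_word z Gam v $ i = None}"
    using assms by (auto simp: local_word_def bij_betw_def)
  moreover have "inj_on (Gam v) {i. local_word z Gam v $ i = None}"
    using assms by (auto simp: bij_betw_def intro: inj_on_subset)
  ultimately show ?thesis by (simp add: card_image)
qed

theorem lemma3p6:
  fixes r :: nat and C0 :: "(bit ^ 'd) set" and adj :: "'n::finite \<Rightarrow> 'n \<Rightarrow> bool"
    and Gam :: "bool \<times> 'n \<Rightarrow> 'd \<Rightarrow> 'n"
    and delta delta_r lam eps :: real and z :: "'n \<times> 'n \<Rightarrow> bit option"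
    and gs :: "bool \<times> 'n \<Rightarrow> (bit ^ 'd) list" and b :: "bool \<times> 'n \<Rightarrow> bit ^ 'd"
    and E' :: "('n \<times> 'n) set"
  assumes r: "r \<ge> 1"
    and code: "linear_code C0"
    and dimr: "\<exists>V. V \<subseteq> C0 \<and> vec.subspace V \<and> vec.dim V = r"
    and delta: "delta = rel_distance C0"
    and deltar: "delta_r = gen_rel_distance C0 r"
    and n2: "CARD('n) \<ge> 2"
    and graph: "regular_graph adj CARD('d)"
    and lam_def: "lam = expansion adj"
    and order: "\<forall>v. bij_betw (Gam v) UNIV {u. adj (snd v) u}"
    and eps: "eps > 0"
    and lam_eps: "lam / real CARD('d) \<le> eps^2 * delta^2 / 2^(r+4)"
    and erasures: "real (card {e \<in> dc_edges adj. z e = None})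
                     \<le> (1 - eps) * delta * delta_r * real CARD('d) * real CARD('n)"
    and param: "\<forall>v. v \<notin> bad_set adj (delta_r * real CARD('d)) z \<longrightarrow>
                  is_param (list_dec C0 (local_word z Gam v)) (b v) (gs v)"
    and fhe: "find_heavy_edges_output adj (eps^2 * delta^2 / 2^(r+3) * real CARD('d))
                (bad_set adj (delta_r * real CARD('d)) z) gs Gam E'"
  defines "B' \<equiv> {v :: bool \<times> 'n. real (card {u. adj (snd v) u \<and> dc_edge v u \<notin> E'})
                   > delta * real CARD('d)}"
  shows "real (card {x. (False, x) \<in> B'}) \<le> (1 - eps/2) * delta * real CARD('n)
       \<and> real (card {x. (True, x) \<in> B'}) \<le> (1 - eps/2) * delta * real CARD('n)
       \<and> real (card {(x, y) \<in> dc_edges adj. (False, x) \<in> B' \<and> (True, y) \<in> B'})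
           \<le> (1 - eps/4) * (delta - lam / real CARD('d)) * delta * real CARD('n) * real CARD('d)"
proof -
  let ?d = "real CARD('d)" and ?n = "real CARD('n)"
  define t where "t = delta_r * ?d"
  define thr where "thr = eps\<^sup>2 * delta\<^sup>2 / 2 ^ (r + 3) * ?d"
  define E0 where "E0 = dc_edges adj - (\<Union>v\<in>bad_set adj t z. incident adj v)"
  obtain c where "c \<in> C0" "c \<noteq> 0" using dimr r vec.dim_eq_0 by (metis not_one_le_zero subsetI singletonI subset_iff)
  then have \<delta>: "0 < delta" "delta \<le> 1" using rel_distance_bounds delta by blast+
  have t: "0 < t" using gen_rel_distance_pos[OF dimr r] deltar by (simp add: t_def)
  have erasures': "real (card {e \<in> dc_edges adj. z e = None}) \<le> (1 - eps) * delta * ?n * t"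
    using erasures by (simp add: t_def algebra_simps)
  have "0 \<le> (1 - eps) * delta * ?n * t" using erasures' of_nat_0_le_iff order.trans by blast
  then have eps1: "eps \<le> 1" using \<delta> t by (simp add: zero_le_mult_iff)
  have "(2::real) ^ (r + 4) \<ge> 32" using r power_increasing[of 5 "r + 4" "2::real"] by simp
  then have "eps\<^sup>2 * delta\<^sup>2 / 2 ^ (r + 4) \<le> eps\<^sup>2 * delta\<^sup>2 / 32"
    by (intro divide_left_mono) auto
  then have "lam / ?d \<le> eps\<^sup>2 * delta\<^sup>2 / 32" using lam_eps by linarith
  then have lam: "expansion adj \<le> ?d * eps\<^sup>2 * delta\<^sup>2 / 32"
    by (simp add: lam_def pos_divide_le_eq mult_ac)
  have "length (gs w) \<le> r" if w: "w \<notin> bad_set adj t z" for w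
  proof (rule length_param_le[OF code param[rule_format, OF w[unfolded t_def]]])
    show "real (card {i. local_word z Gam w $ i = None}) \<le> gen_rel_distance C0 r * ?d"
      using w card_erased_local_word[where Gam = Gam and v = w and adj = adj, OF order[rule_format]]
      by (simp add: bad_set_def t_def deltar not_less)
  qed
  moreover have "(fhe_step adj thr gs Gam)\<^sup>*\<^sup>* E0 E'"
    using fhe by (simp add: find_heavy_edges_output_def E0_def t_def thr_def)
  ultimately obtain D where cover: "E0 - E' \<subseteq> (\<Union>w. D w)" and D_inc: "\<And>w. D w \<subseteq> incident adj w"
    and D_card: "\<And>w. real (card (D w)) \<le> 2 ^ r * thr"
    using fhe_removed_edges_charged[OF order E0_def] by (metis thr_def zero_le_mult_iff zero_le_divide_iff zero_le_power2 of_nat_0_le_iff zero_le_numeral zero_le_power)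
  have "2 ^ r * thr = eps\<^sup>2 * delta\<^sup>2 * ?d / 8"
    by (simp add: thr_def power_add)
  note side = card_heavy_side_le[OF graph n2 E0_def cover D_inc D_card[unfolded this] t erasures' _ \<delta> eps eps1 lam]
  have sides: "real (card {x. (s, x) \<in> B'}) \<le> (1 - eps/2) * delta * ?n" for s
    using side[of s] by (simp add: B'_def)
  have "real (card {(x, y). adj x y \<and> x \<in> {x. (False, x) \<in> B'} \<and> y \<in> {y. (True, y) \<in> B'}})
      \<le> (1 - eps/4) * (delta - expansion adj / ?d) * delta * ?n * ?d"
    using sides \<delta> eps eps1 lam
    by (intro edge_count_arith[OF expander_mixing_lemma[OF graph n2]])
      (simp_all add: expansion_def le_max_iff_disj)
  moreover have "{(x, y) \<in> dc_edges adj. (False, x) \<in> B' \<and> (True, y) \<in> B'}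
      = {(x, y). adj x y \<and> x \<in> {x. (False, x) \<in> B'} \<and> y \<in> {y. (True, y) \<in> B'}}"
    by (auto simp: dc_edges_def)
  ultimately show ?thesis using sides by (simp add: lam_def)
qed

end
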